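(* Fix $\beta>2$ and let $F_\beta(\mathbf{x},r)$, $r_1^\beta$, $r_2^\beta$, $\mathbf{m}_0^\beta(r)$, $\boldsymbol{\sigma}_0^\beta(r)$, $\mathbf{p}^\beta(r)$ be as in the context. Then: (1) $\mathbf{m}_0^\beta(r)$ is a local minimum of $F_\beta(\cdot,r)$ for all $r\in(0,r_2^\beta)$; (2) $\boldsymbol{\sigma}_0^\beta(r)$ is a saddle point of $F_\beta(\cdot,r)$ for all $r>0$; (3) $\mathbf{p}^\beta(r)$ is a local maximum of $F_\beta(\cdot,r)$ for all $r\in(0,r_1^\beta)$, and a saddle point of $F_\beta(\cdot,r)$ for all $r\in(r_1^\beta,r_2^\beta)$.
   Context: $\Xi=\{(x_1,x_2): x_1,x_2\ge0,\ x_1+x_2\le1\}$, $x_0=1-x_1-x_2$, $\mathbf{v}_k=(\cos(2\pi k/3),\sin(2\pi k/3))$, and for $r\ge0$ $$F_\beta(\mathbf{x},r)=-\frac12\Big|\sum_{k=0}^2x_k\mathbf{v}_k\Big|^2+\frac1\beta\sum_{k=0}^2x_k\log(3x_k)+r\,x_0-\frac r2(x_1+x_2)$$ (Potts potential with external field of magnitude $r$ and angle $\pi$). Let $h(t)=-3t(1-2t)\log\frac{1-2t}{t}-3t+1$ on $(0,1/2)$, $f_r(t)=\frac{2}{3(1-r-3t)}\log\frac{1-2t}{t}$, $k_r=(1-r)/3$; for $0<r<1$, $m_0(r)$ is the unique solution in $(0,k_r)$ of $h(t)=r$ (equivalently of $f_r'(t)=0$), and $r\mapsto f_r(m_0(r))$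 is increasing on $(0,1)$ with limit $\infty$ as $r\uparrow 1$. Let $r_2^\beta$ be the unique $r\in(0,1)$ with $f_r(m_0(r))=\beta$, and $r_1^\beta=1-\frac2\beta-\frac{2}{3\beta}\log\big(\frac{3\beta}2-2\big)$ (one has $r_1^\beta<r_2^\beta$). For $r\in(0,r_2^\beta)$, the equation $f_r(t)=\beta$ has exactly three solutions $p_\beta(r)<u_\beta(r)<q_\beta(r)$ in $(0,1/2)$, with $p_\beta(r)\in(0,m_0(r))$, $u_\beta(r)\in(m_0(r),k_r)$, $q_\beta(r)\in(1/3,1/2)$; for every $r>0$ the equation $f_r(t)=\beta$ has exactly one solution $q_\beta(r)$ in $(1/3,1/2)$. Define $\mathbf{m}_0^\beta(r)=(p_\beta(r),p_\beta(r))$, $\mathbf{p}^\beta(r)=(u_\beta(r),u_\beta(r))$ for $r\in(0,r_2^\beta)$, and $\boldsymbol{\sigma}_0^\beta(r)=(q_\beta(r),q_\beta(r))$ for $r>0$; these are critical points of $F_\beta(\cdot,r)$. A saddle point is a critical point where the Hessian (in $(x_1,x_2)$) has one positive and one negative eigenvalue. *)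

theory Defs
  imports "HOL-Analysis.Analysis"
begin

definition pt :: "real \<Rightarrow> real \<Rightarrow> real^2" where
  "pt a b = vector [a, b]"

definition Xi :: "(real^2) set" where
  "Xi = {x. x$1 \<ge> 0 \<and> x$2 \<ge> 0 \<and> x$1 + x$2 \<le> 1}"

text \<open>Potts potential with external field of magnitude r and angle pi.
  x0 = 1 - x1 - x2, v_k = (cos(2 pi k/3), sin(2 pi k/3)).\<close>
definition Fb :: "real \<Rightarrow> real^2 \<Rightarrow> real \<Rightarrow> real" where
  "Fb \<beta> x r = (let x1 = x$1; x2 = x$2; x0 = 1 - x1 - x2;
      xs = (\<lambda>k::nat. if k = 0 then x0 else if k = 1 then x1 else x2);
      a = (\<Sum>k<3. xs k * cos (2 * pi * real k / 3));
      b = (\<Sum>k<3. xs k * sin (2 * pi * real k / 3))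
    in - (1/2) * (a\<^sup>2 + b\<^sup>2) + (1/\<beta>) * (\<Sum>k<3. xs k * ln (3 * xs k))
       + r * x0 - (r/2) * (x1 + x2))"

definition h_fun :: "real \<Rightarrow> real" where
  "h_fun t = - 3 * t * (1 - 2*t) * ln ((1 - 2*t) / t) - 3 * t + 1"

definition f_fun :: "real \<Rightarrow> real \<Rightarrow> real" where
  "f_fun r t = 2 / (3 * (1 - r - 3*t)) * ln ((1 - 2*t) / t)"

definition k_fun :: "real \<Rightarrow> real" where
  "k_fun r = (1 - r) / 3"

definition m0 :: "real \<Rightarrow> real" where
  "m0 r = (THE t. 0 < t \<and> t < k_fun r \<and> h_fun t = r)"

definition r2 :: "real \<Rightarrow> real" where
  "r2 \<beta> = (THE r. 0 < r \<and> r < 1 \<and> f_fun r (m0 r) = \<beta>)"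

definition r1 :: "real \<Rightarrow> real" where
  "r1 \<beta> = 1 - 2/\<beta> - 2/(3*\<beta>) * ln (3*\<beta>/2 - 2)"

definition p_sol :: "real \<Rightarrow> real \<Rightarrow> real" where
  "p_sol \<beta> r = (THE t. 0 < t \<and> t < m0 r \<and> f_fun r t = \<beta>)"

definition u_sol :: "real \<Rightarrow> real \<Rightarrow> real" where
  "u_sol \<beta> r = (THE t. m0 r < t \<and> t < k_fun r \<and> f_fun r t = \<beta>)"

definition q_sol :: "real \<Rightarrow> real \<Rightarrow> real" where
  "q_sol \<beta> r = (THE t. 1/3 < t \<and> t < 1/2 \<and> f_fun r t = \<beta>)"

definition m0_pt :: "real \<Rightarrow> real \<Rightarrow> real^2" where
  "m0_pt \<beta> r = pt (p_sol \<beta> r) (p_sol \<beta> r)"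

definition p_pt :: "real \<Rightarrow> real \<Rightarrow> real^2" where
  "p_pt \<beta> r = pt (u_sol \<beta> r) (u_sol \<beta> r)"

definition sigma0_pt :: "real \<Rightarrow> real \<Rightarrow> real^2" where
  "sigma0_pt \<beta> r = pt (q_sol \<beta> r) (q_sol \<beta> r)"

definition pderiv2 :: "2 \<Rightarrow> (real^2 \<Rightarrow> real) \<Rightarrow> real^2 \<Rightarrow> real" where
  "pderiv2 i f x = deriv (\<lambda>t. f (x + t *\<^sub>R axis i 1)) 0"

definition hessian :: "(real^2 \<Rightarrow> real) \<Rightarrow> real^2 \<Rightarrow> real^2^2" where
  "hessian f x = (\<chi> i j. pderiv2 i (pderiv2 j f) x)"

definition is_eigenvalue :: "real^2^2 \<Rightarrow> real \<Rightarrow> bool" where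
  "is_eigenvalue A c \<longleftrightarrow> (\<exists>v. v \<noteq> 0 \<and> A *v v = c *\<^sub>R v)"

definition critical_point :: "(real^2 \<Rightarrow> real) \<Rightarrow> real^2 \<Rightarrow> bool" where
  "critical_point f x \<longleftrightarrow> (f has_derivative (\<lambda>h. 0)) (at x)"

definition local_min_on :: "(real^2 \<Rightarrow> real) \<Rightarrow> (real^2) set \<Rightarrow> real^2 \<Rightarrow> bool" where
  "local_min_on f S x \<longleftrightarrow> x \<in> S \<and> (\<exists>e>0. \<forall>y\<in>S. dist y x < e \<longrightarrow> f x \<le> f y)"

definition local_max_on :: "(real^2 \<Rightarrow> real) \<Rightarrow> (real^2) set \<Rightarrow> real^2 \<Rightarrow> bool" where
  "local_max_on f S x \<longleftrightarrow> x \<in> S \<and> (\<exists>e>0. \<forall>y\<in>S. dist y x < e \<longrightarrow> f y \<le> f x)"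

definition saddle_point :: "(real^2 \<Rightarrow> real) \<Rightarrow> real^2 \<Rightarrow> bool" where
  "saddle_point f x \<longleftrightarrow> critical_point f x \<and>
     (\<exists>l1 l2. l1 > 0 \<and> l2 < 0 \<and> is_eigenvalue (hessian f x) l1 \<and> is_eigenvalue (hessian f x) l2)"

end

theory Submission
  imports Defs "HOL-Real_Asymp.Real_Asymp"
begin

text \<open>
  All three points lie on the diagonal x1 = x2 = t, where the two partial derivatives of the
  potential coincide, and such a point is critical exactly when f_r(t) = beta.  The Hessian at
  (t, t) has equal diagonal entries, so (1, 1) and (1, -1) are eigenvectors, with eigenvalues
  -9/2 + (1/t + 2/(1 - 2t))/beta and -3/2 + 1/(beta t).  When f_r(t) = beta the first equals
  3 (h(t) - r) / (2 t (1 - 2t) log((1 - 2t)/t)), so its sign is decided by the position of t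
  relative to m_0(r) and 1/3; the second is positive iff beta t < 2/3, and since t = 2/(3 beta)
  solves f_{r_1}(t) = beta, monotonicity of f in r and t decides this sign at u_beta(r) according
  as r < r_1 or r > r_1.  A definite Hessian gives a local extremum by a second order argument along
  segments: on a small ball the Hessian form changes by at most a factor 1 +- eta, so it keeps its
  sign.
\<close>

lemma has_derivative_vec_nth [derivative_intros]:
  "((\<lambda>y::real^'n. y $ i) has_derivative (\<lambda>h. h $ i)) F"
  by (rule bounded_linear_imp_has_derivative[OF bounded_linear_vec_nth])

lemma has_derivative_ln_3:
  fixes g :: "'a::real_normed_vector \<Rightarrow> real"
  assumes "(g has_derivative g') (at x)" "0 < g x"
  shows "((\<lambda>y. ln (3 * g y)) has_derivative (\<lambda>h. g' h / g x)) (at x)"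
proof -
  have "((\<lambda>z. ln (3 * z)) has_real_derivative 1 / g x) (at (g x))"
    using assms(2) by (auto intro!: derivative_eq_intros)
  from DERIV_compose_FDERIV[OF this assms(1)] show ?thesis
    by simp
qed

lemma has_real_derivative_along_line:
  fixes G :: "'a::real_normed_vector \<Rightarrow> real"
  assumes "(G has_derivative G') (at (x + u *\<^sub>R d))"
  shows "((\<lambda>t. G (x + t *\<^sub>R d)) has_real_derivative G' d) (at u)"
proof -
  have line: "((\<lambda>t. x + t *\<^sub>R d) has_derivative (\<lambda>h. h *\<^sub>R d)) (at u)"
    by (auto intro!: derivative_eq_intros)
  have "linear G'" using assms by (rule has_derivative_linear)
  then have "(\<lambda>h. G' (h *\<^sub>R d)) = (*) (G' d)"
    by (auto simp: linear_scale)
  with has_derivative_compose[OF line assms] show ?thesis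
    by (simp add: has_field_derivative_def o_def)
qed

lemma segment_in_ball:
  fixes x y :: "'a::real_normed_vector"
  assumes "y \<in> ball x e" "u \<in> {0..1}"
  shows "x + u *\<^sub>R (y - x) \<in> ball x e"
proof -
  have "norm (u *\<^sub>R (y - x)) \<le> norm (y - x)"
    using assms(2) by (simp add: mult_left_le_one_le)
  with assms(1) show ?thesis by (simp add: dist_norm norm_minus_commute)
qed

lemma start_le_end_if_second_deriv_nonneg:
  fixes \<phi> \<psi> \<psi>' :: "real \<Rightarrow> real"
  assumes \<phi>: "\<And>u. u \<in> {0..1} \<Longrightarrow> (\<phi> has_real_derivative \<psi> u) (at u)"
    and \<psi>: "\<And>u. u \<in> {0..1} \<Longrightarrow> (\<psi> has_real_derivative \<psi>' u) (at u)"
    and nonneg: "\<And>u. u \<in> {0..1} \<Longrightarrow> 0 \<le> \<psi>' u"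
    and "\<psi> 0 = 0"
  shows "\<phi> 0 \<le> \<phi> 1"
proof (rule DERIV_nonneg_imp_nondecreasing[of 0 1 \<phi>])
  fix u :: real assume u: "0 \<le> u" "u \<le> 1"
  have "\<psi> 0 \<le> \<psi> u"
  proof (rule DERIV_nonneg_imp_nondecreasing[of 0 u \<psi>, OF u(1)])
    fix v :: real assume "0 \<le> v" "v \<le> u"
    with u \<psi> nonneg show "\<exists>y. (\<psi> has_real_derivative y) (at v) \<and> 0 \<le> y"
      by (intro exI[of _ "\<psi>' v"]) auto
  qed
  with u \<phi> \<open>\<psi> 0 = 0\<close> show "\<exists>y. (\<phi> has_real_derivative y) (at u) \<and> 0 \<le> y"
    by (intro exI[of _ "\<psi> u"]) auto
qed simp

lemma strict_mono_on_if_deriv_pos: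
  fixes f :: "real \<Rightarrow> real"
  assumes S: "is_interval S"
    and deriv: "\<And>x. x \<in> S \<Longrightarrow> (f has_real_derivative f' x) (at x)"
    and pos: "\<And>x. x \<in> interior S \<Longrightarrow> 0 < f' x"
  shows "strict_mono_on S f"
proof (rule strict_mono_onI)
  fix x y assume xy: "x \<in> S" "y \<in> S" "x < y"
  have sub: "{x..y} \<subseteq> S"
  proof
    fix z assume "z \<in> {x..y}"
    then have "x \<le> z" "z \<le> y" by auto
    with S xy show "z \<in> S" unfolding is_interval_1 by blast
  qed
  then have "interior {x<..<y} \<subseteq> interior S"
    by (intro interior_mono) auto
  then have inner: "{x<..<y} \<subseteq> interior S" by simp
  show "f x < f y"
  proof (rule DERIV_pos_imp_increasing_open[OF \<open>x < y\<close>])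
    fix z assume "x < z" "z < y"
    with inner have z: "z \<in> interior S" by auto
    then have "z \<in> S" using interior_subset by blast
    with z show "\<exists>D. (f has_real_derivative D) (at z) \<and> 0 < D"
      using deriv pos by blast
  next
    show "continuous_on {x..y} f"
    proof (rule DERIV_atLeastAtMost_imp_continuous_on)
      fix z assume "x \<le> z" "z \<le> y"
      with sub have "z \<in> S" by auto
      then show "\<exists>D. (f has_real_derivative D) (at z)" using deriv by blast
    qed
  qed
qed

lemma strict_antimono_on_if_deriv_neg:
  fixes f :: "real \<Rightarrow> real"
  assumes S: "is_interval S"
    and deriv: "\<And>x. x \<in> S \<Longrightarrow> (f has_real_derivative f' x) (at x)"
    and neg: "\<And>x. x \<in> interior S \<Longrightarrow> f' x < 0"
  shows "strict_antimono_on S f"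
proof -
  have "strict_mono_on S (\<lambda>x. - f x)"
    by (rule strict_mono_on_if_deriv_pos[OF S DERIV_minus[OF deriv]]) (use neg in auto)
  then show ?thesis by (simp add: monotone_on_def)
qed

lemma IVT_eventually_at_right:
  fixes f :: "real \<Rightarrow> real"
  assumes "a < b" and cont: "continuous_on {a<..b} f" and "f b < c"
    and ev: "\<forall>\<^sub>F t in at_right a. c < f t"
  shows "\<exists>t. a < t \<and> t < b \<and> f t = c"
proof -
  obtain d where "a < d" and d: "\<And>t. a < t \<Longrightarrow> t < d \<Longrightarrow> c < f t"
    using ev unfolding eventually_at_right_field by blast
  define s where "s = (a + min b d) / 2"
  have s: "a < s" "s < b" "s < d" using \<open>a < b\<close> \<open>a < d\<close> by (auto simp: s_def)
  have "continuous_on {s..b} f"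
    by (rule continuous_on_subset[OF cont]) (use s in auto)
  then obtain t where t: "s \<le> t" "t \<le> b" "f t = c"
    using IVT2'[of f b c s] d[of s] s \<open>f b < c\<close> by force
  moreover have "t \<noteq> b" using t \<open>f b < c\<close> by auto
  ultimately show ?thesis using s by (intro exI[of _ t]) auto
qed

lemma IVT_eventually_at_left:
  fixes f :: "real \<Rightarrow> real"
  assumes "a < b" and cont: "continuous_on {a..<b} f" and "f a < c"
    and ev: "\<forall>\<^sub>F t in at_left b. c < f t"
  shows "\<exists>t. a < t \<and> t < b \<and> f t = c"
proof -
  obtain d where "d < b" and d: "\<And>t. d < t \<Longrightarrow> t < b \<Longrightarrow> c < f t"
    using ev unfolding eventually_at_left_field by blast
  define s where "s = (max a d + b) / 2"
  have s: "a < s" "s < b" "d < s" using \<open>a < b\<close> \<open>d < b\<close> by (auto simp: s_def)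
  have "continuous_on {a..s} f"
    by (rule continuous_on_subset[OF cont]) (use s in auto)
  then obtain t where t: "a \<le> t" "t \<le> s" "f t = c"
    using IVT'[of f a c s] d[of s] s \<open>f a < c\<close> by force
  moreover have "t \<noteq> a" using t \<open>f a < c\<close> by auto
  ultimately show ?thesis using s by (intro exI[of _ t]) auto
qed

lemma scaled_div_le:
  fixes a b c p q :: real
  assumes "0 \<le> c" "0 < p" "0 < q" "a * q \<le> b * p"
  shows "a * (c / p) \<le> b * (c / q)"
proof -
  have "c * (a * q) \<le> c * (b * p)" using assms by (intro mult_left_mono)
  then show ?thesis using assms by (simp add: field_simps)
qed

section \<open>The potential in coordinates\<close>

lemma pt_nth [simp]: "pt a b $ 1 = a" "pt a b $ 2 = b"
  by (simp_all add: pt_def)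

definition Xi_interior :: "(real^2) set" where
  "Xi_interior = {x. 0 < x$1 \<and> 0 < x$2 \<and> x$1 + x$2 < 1}"

lemma open_Xi_interior: "open Xi_interior"
  unfolding Xi_interior_def
  by (intro open_Collect_conj open_Collect_less continuous_intros)

lemma Xi_interior_subset: "Xi_interior \<subseteq> Xi"
  by (auto simp: Xi_interior_def Xi_def)

lemma pt_in_Xi_interior: "0 < t \<Longrightarrow> t < 1/2 \<Longrightarrow> pt t t \<in> Xi_interior"
  by (simp add: Xi_interior_def)

definition entropy_term :: "real \<Rightarrow> real" where
  "entropy_term y = y * ln (3 * y)"

definition interaction_energy :: "real \<Rightarrow> real \<Rightarrow> real" where
  "interaction_energy a b = -(1/2) * ((1-a-b)^2 + a^2 + b^2 - (1-a-b)*a - (1-a-b)*b - a*b)"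

definition mixing_entropy :: "real \<Rightarrow> real \<Rightarrow> real" where
  "mixing_entropy a b = entropy_term (1-a-b) + entropy_term a + entropy_term b"

definition field_energy :: "real \<Rightarrow> real \<Rightarrow> real \<Rightarrow> real" where
  "field_energy r a b = r*(1-a-b) - (r/2)*(a+b)"

definition Fb_coord :: "real \<Rightarrow> real \<Rightarrow> real \<Rightarrow> real \<Rightarrow> real" where
  "Fb_coord \<beta> r a b = interaction_energy a b + (1/\<beta>) * mixing_entropy a b + field_energy r a b"

lemma sum_lessThan_3: "(\<Sum>k<3. g k) = g 0 + g 1 + g (2::nat)"
  by (simp add: numeral_3_eq_3 numeral_2_eq_2 add.assoc)

lemma Fb_eq_Fb_coord: "Fb \<beta> x r = Fb_coord \<beta> r (x$1) (x$2)"
proof -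
  have angle2: "2 * pi * real (2::nat) / 3 = pi/3 + pi" by simp
  have trig: "cos (2 * pi * real (1::nat) / 3) = -1/2" "sin (2 * pi * real (1::nat) / 3) = sqrt 3/2"
    "cos (2 * pi * real (2::nat) / 3) = -1/2" "sin (2 * pi * real (2::nat) / 3) = -(sqrt 3/2)"
    using cos_120 sin_120 by (simp_all only: angle2 cos_periodic_pi sin_periodic_pi cos_60 sin_60) simp_all
  have sq: "(c - a/2 - b/2)^2 + (sqrt 3/2*a - sqrt 3/2*b)^2 = c^2+a^2+b^2-c*a-c*b-a*b" for a b c :: real
  proof -
    have "sqrt 3/2*a - sqrt 3/2*b = sqrt 3 * ((a-b)/2)"
      by (simp add: algebra_simps)
    then have "(sqrt 3/2*a - sqrt 3/2*b)^2 = 3 * ((a-b)/2)^2"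
      by (simp only: power_mult_distrib real_sqrt_pow2 zero_le_numeral)
    then show ?thesis by (simp add: power2_eq_square algebra_simps)
  qed
  show ?thesis
    unfolding Fb_def Let_def sum_lessThan_3 Fb_coord_def interaction_energy_def mixing_entropy_def
      field_energy_def entropy_term_def trig
    using sq[of "1 - x$1 - x$2" "x$1" "x$2"] by (simp add: algebra_simps)
qed

definition grad1 :: "real \<Rightarrow> real \<Rightarrow> real \<Rightarrow> real \<Rightarrow> real" where
  "grad1 \<beta> r a b = -(3/2)*(a - (1-a-b)) + (1/\<beta>)*(ln (3*a) - ln (3*(1-a-b))) - 3*r/2"

definition grad2 :: "real \<Rightarrow> real \<Rightarrow> real \<Rightarrow> real \<Rightarrow> real" where
  "grad2 \<beta> r a b = -(3/2)*(b - (1-a-b)) + (1/\<beta>)*(ln (3*b) - ln (3*(1-a-b))) - 3*r/2"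

lemma grad2_sym: "grad2 \<beta> r t t = grad1 \<beta> r t t"
  by (simp add: grad1_def grad2_def)

definition hess11 :: "real \<Rightarrow> real \<Rightarrow> real \<Rightarrow> real" where
  "hess11 \<beta> a b = -3 + (1/\<beta>)*(1/a + 1/(1-a-b))"

definition hess12 :: "real \<Rightarrow> real \<Rightarrow> real \<Rightarrow> real" where
  "hess12 \<beta> a b = -3/2 + (1/\<beta>)*(1/(1-a-b))"

definition hess22 :: "real \<Rightarrow> real \<Rightarrow> real \<Rightarrow> real" where
  "hess22 \<beta> a b = -3 + (1/\<beta>)*(1/b + 1/(1-a-b))"

lemma has_derivative_entropy_term:
  assumes "(g has_derivative g') (at x)" "0 < g x"
  shows "((\<lambda>y. entropy_term (g y)) has_derivative (\<lambda>h. (ln (3 * g x) + 1) * g' h)) (at x)"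
proof -
  have "(entropy_term has_real_derivative ln (3 * g x) + 1) (at (g x))"
    unfolding entropy_term_def using assms(2) by (auto intro!: derivative_eq_intros)
  from DERIV_compose_FDERIV[OF this assms(1)] show ?thesis
    by (simp add: mult.commute)
qed

lemma grad1_has_derivative:
  assumes "x \<in> Xi_interior"
  shows "((\<lambda>y. grad1 \<beta> r (y$1) (y$2)) has_derivative
          (\<lambda>h. hess11 \<beta> (x$1) (x$2) * h$1 + hess12 \<beta> (x$1) (x$2) * h$2)) (at x)"
proof -
  have pos: "0 < x$1" "0 < x$2" "0 < 1 - x$1 - x$2"
    using assms by (auto simp: Xi_interior_def)
  show ?thesis
    unfolding grad1_def
    apply (rule has_derivative_eq_rhs)
     apply (rule has_derivative_ln_3 derivative_intros pos)+
    by (simp add: fun_eq_iff hess11_def hess12_def ring_distribs diff_divide_distrib add_divide_distrib)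
qed

lemma grad2_has_derivative:
  assumes "x \<in> Xi_interior"
  shows "((\<lambda>y. grad2 \<beta> r (y$1) (y$2)) has_derivative
          (\<lambda>h. hess12 \<beta> (x$1) (x$2) * h$1 + hess22 \<beta> (x$1) (x$2) * h$2)) (at x)"
proof -
  have pos: "0 < x$1" "0 < x$2" "0 < 1 - x$1 - x$2"
    using assms by (auto simp: Xi_interior_def)
  show ?thesis
    unfolding grad2_def
    apply (rule has_derivative_eq_rhs)
     apply (rule has_derivative_ln_3 derivative_intros pos)+
    by (simp add: fun_eq_iff hess22_def hess12_def ring_distribs diff_divide_distrib add_divide_distrib)
qed

lemma interaction_energy_has_derivative:
  "((\<lambda>y. interaction_energy (y$1) (y$2)) has_derivative
     (\<lambda>h. -(3/2)*(x$1 - (1-x$1-x$2)) * h$1 - (3/2)*(x$2 - (1-x$1-x$2)) * h$2)) (at x)"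
  unfolding interaction_energy_def
  by (rule has_derivative_eq_rhs, (rule derivative_intros)+) (simp add: fun_eq_iff algebra_simps)

lemma mixing_entropy_has_derivative:
  assumes "x \<in> Xi_interior"
  shows "((\<lambda>y. mixing_entropy (y$1) (y$2)) has_derivative
     (\<lambda>h. (ln (3*x$1) - ln (3*(1-x$1-x$2))) * h$1 + (ln (3*x$2) - ln (3*(1-x$1-x$2))) * h$2)) (at x)"
proof -
  have pos: "0 < x$1" "0 < x$2" "0 < 1 - x$1 - x$2"
    using assms by (auto simp: Xi_interior_def)
  show ?thesis
    unfolding mixing_entropy_def
    by (rule has_derivative_eq_rhs, (rule has_derivative_entropy_term derivative_intros pos)+)
      (simp add: fun_eq_iff algebra_simps)
qed

lemma field_energy_has_derivative:
  "((\<lambda>y. field_energy r (y$1) (y$2)) has_derivative (\<lambda>h. -(3*r/2) * h$1 - (3*r/2) * h$2)) (at x)"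
  unfolding field_energy_def
  by (rule has_derivative_eq_rhs, (rule derivative_intros)+) (simp add: fun_eq_iff algebra_simps)

lemma Fb_has_derivative:
  assumes "x \<in> Xi_interior"
  shows "((\<lambda>y. Fb \<beta> y r) has_derivative
          (\<lambda>h. grad1 \<beta> r (x$1) (x$2) * h$1 + grad2 \<beta> r (x$1) (x$2) * h$2)) (at x)"
proof -
  have "((\<lambda>y. Fb_coord \<beta> r (y$1) (y$2)) has_derivative
     (\<lambda>h. (-(3/2)*(x$1 - (1-x$1-x$2)) * h$1 - (3/2)*(x$2 - (1-x$1-x$2)) * h$2)
        + (1/\<beta>) * ((ln (3*x$1) - ln (3*(1-x$1-x$2))) * h$1 + (ln (3*x$2) - ln (3*(1-x$1-x$2))) * h$2)
        + (-(3*r/2) * h$1 - (3*r/2) * h$2))) (at x)"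
    unfolding Fb_coord_def
    by (intro has_derivative_add has_derivative_mult_right interaction_energy_has_derivative
        mixing_entropy_has_derivative[OF assms] field_energy_has_derivative)
  then show ?thesis
    unfolding Fb_eq_Fb_coord
    by (rule has_derivative_eq_rhs) (simp add: fun_eq_iff grad1_def grad2_def ring_distribs)
qed

lemma pderiv2_eq:
  assumes "(G has_derivative G') (at x)"
  shows "pderiv2 i G x = G' (axis i 1)"
  unfolding pderiv2_def
  by (rule DERIV_imp_deriv, rule has_real_derivative_along_line) (use assms in simp)

lemma pderiv2_Fb:
  assumes "y \<in> Xi_interior"
  shows "pderiv2 1 (\<lambda>x. Fb \<beta> x r) y = grad1 \<beta> r (y$1) (y$2)"
    and "pderiv2 2 (\<lambda>x. Fb \<beta> x r) y = grad2 \<beta> r (y$1) (y$2)"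
  by (simp_all add: pderiv2_eq[OF Fb_has_derivative[OF assms]] axis_def)

lemma hessian_Fb:
  assumes "x \<in> Xi_interior"
  shows "hessian (\<lambda>x. Fb \<beta> x r) x $ 1 $ 1 = hess11 \<beta> (x$1) (x$2)"
    and "hessian (\<lambda>x. Fb \<beta> x r) x $ 1 $ 2 = hess12 \<beta> (x$1) (x$2)"
    and "hessian (\<lambda>x. Fb \<beta> x r) x $ 2 $ 1 = hess12 \<beta> (x$1) (x$2)"
    and "hessian (\<lambda>x. Fb \<beta> x r) x $ 2 $ 2 = hess22 \<beta> (x$1) (x$2)"
proof -
  have "(pderiv2 1 (\<lambda>x. Fb \<beta> x r) has_derivative
         (\<lambda>h. hess11 \<beta> (x$1) (x$2) * h$1 + hess12 \<beta> (x$1) (x$2) * h$2)) (at x)"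
    by (rule has_derivative_transform_within_open[OF grad1_has_derivative[OF assms] open_Xi_interior assms])
      (simp add: pderiv2_Fb)
  moreover have "(pderiv2 2 (\<lambda>x. Fb \<beta> x r) has_derivative
         (\<lambda>h. hess12 \<beta> (x$1) (x$2) * h$1 + hess22 \<beta> (x$1) (x$2) * h$2)) (at x)"
    by (rule has_derivative_transform_within_open[OF grad2_has_derivative[OF assms] open_Xi_interior assms])
      (simp add: pderiv2_Fb)
  ultimately show "hessian (\<lambda>x. Fb \<beta> x r) x $ 1 $ 1 = hess11 \<beta> (x$1) (x$2)"
    "hessian (\<lambda>x. Fb \<beta> x r) x $ 1 $ 2 = hess12 \<beta> (x$1) (x$2)"
    "hessian (\<lambda>x. Fb \<beta> x r) x $ 2 $ 1 = hess12 \<beta> (x$1) (x$2)"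
    "hessian (\<lambda>x. Fb \<beta> x r) x $ 2 $ 2 = hess22 \<beta> (x$1) (x$2)"
    by (simp_all add: hessian_def pderiv2_eq axis_def)
qed

section \<open>Second order behaviour near a critical point\<close>

definition hess_form :: "real \<Rightarrow> real^2 \<Rightarrow> real^2 \<Rightarrow> real" where
  "hess_form \<beta> z d = hess11 \<beta> (z$1) (z$2) * (d$1)^2 + 2 * hess12 \<beta> (z$1) (z$2) * d$1 * d$2
     + hess22 \<beta> (z$1) (z$2) * (d$2)^2"

definition entropy_form :: "real^2 \<Rightarrow> real^2 \<Rightarrow> real" where
  "entropy_form z d = (d$1)^2 / z$1 + (d$2)^2 / z$2 + (d$1 + d$2)^2 / (1 - z$1 - z$2)"

definition interaction_form :: "real^2 \<Rightarrow> real" where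
  "interaction_form d = 3 * ((d$1)^2 + d$1 * d$2 + (d$2)^2)"

lemma hess_form_eq: "hess_form \<beta> z d = entropy_form z d / \<beta> - interaction_form d"
  by (simp add: hess_form_def entropy_form_def interaction_form_def hess11_def hess12_def hess22_def
      power2_eq_square ring_distribs diff_divide_distrib add_divide_distrib mult_ac add_ac)

lemma interaction_form_eq: "interaction_form d = (9/4) * (d$1 + d$2)^2 + (3/4) * (d$1 - d$2)^2"
  by (simp add: interaction_form_def power2_eq_square algebra_simps)

lemma interaction_form_nonneg: "0 \<le> interaction_form d"
  by (simp add: interaction_form_eq)

definition grad_form :: "real \<Rightarrow> real \<Rightarrow> real^2 \<Rightarrow> real^2 \<Rightarrow> real" where
  "grad_form \<beta> r z d = grad1 \<beta> r (z$1) (z$2) * d$1 + grad2 \<beta> r (z$1) (z$2) * d$2"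

lemma Fb_line_derivatives:
  assumes "x + u *\<^sub>R d \<in> Xi_interior"
  shows "((\<lambda>u. Fb \<beta> (x + u *\<^sub>R d) r) has_real_derivative grad_form \<beta> r (x + u *\<^sub>R d) d) (at u)"
    and "((\<lambda>u. grad_form \<beta> r (x + u *\<^sub>R d) d) has_real_derivative hess_form \<beta> (x + u *\<^sub>R d) d) (at u)"
proof -
  show "((\<lambda>u. Fb \<beta> (x + u *\<^sub>R d) r) has_real_derivative grad_form \<beta> r (x + u *\<^sub>R d) d) (at u)"
    unfolding grad_form_def by (rule has_real_derivative_along_line[OF Fb_has_derivative[OF assms]])
  define z where "z = x + u *\<^sub>R d"
  have "((\<lambda>y. grad_form \<beta> r y d) has_derivative
         (\<lambda>h. (hess11 \<beta> (z$1) (z$2) * h$1 + hess12 \<beta> (z$1) (z$2) * h$2) * d$1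
             + (hess12 \<beta> (z$1) (z$2) * h$1 + hess22 \<beta> (z$1) (z$2) * h$2) * d$2)) (at z)"
    unfolding grad_form_def z_def
    by (intro has_derivative_add has_derivative_mult_left grad1_has_derivative grad2_has_derivative assms)
  from has_real_derivative_along_line[OF this[unfolded z_def]]
  show "((\<lambda>u. grad_form \<beta> r (x + u *\<^sub>R d) d) has_real_derivative hess_form \<beta> (x + u *\<^sub>R d) d) (at u)"
    by (simp add: hess_form_def power2_eq_square algebra_simps)
qed

lemma Fb_le_on_ball:
  assumes ball: "ball x e \<subseteq> Xi_interior" and y: "y \<in> ball x e"
    and crit: "grad1 \<beta> r (x$1) (x$2) = 0" "grad2 \<beta> r (x$1) (x$2) = 0"
    and hess: "\<And>z d. z \<in> ball x e \<Longrightarrow> 0 \<le> hess_form \<beta> z d"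
  shows "Fb \<beta> x r \<le> Fb \<beta> y r"
proof -
  have inner: "x + u *\<^sub>R (y - x) \<in> Xi_interior" if "u \<in> {0..1}" for u
    using segment_in_ball[OF y that] ball by blast
  have "(\<lambda>u. Fb \<beta> (x + u *\<^sub>R (y - x)) r) 0 \<le> (\<lambda>u. Fb \<beta> (x + u *\<^sub>R (y - x)) r) 1"
    by (rule start_le_end_if_second_deriv_nonneg[OF Fb_line_derivatives[OF inner]])
      (use hess segment_in_ball[OF y] crit in \<open>simp_all add: grad_form_def\<close>)
  then show ?thesis by simp
qed

lemma Fb_ge_on_ball:
  assumes ball: "ball x e \<subseteq> Xi_interior" and y: "y \<in> ball x e"
    and crit: "grad1 \<beta> r (x$1) (x$2) = 0" "grad2 \<beta> r (x$1) (x$2) = 0"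
    and hess: "\<And>z d. z \<in> ball x e \<Longrightarrow> hess_form \<beta> z d \<le> 0"
  shows "Fb \<beta> y r \<le> Fb \<beta> x r"
proof -
  have inner: "x + u *\<^sub>R (y - x) \<in> Xi_interior" if "u \<in> {0..1}" for u
    using segment_in_ball[OF y that] ball by blast
  have "(\<lambda>u. - Fb \<beta> (x + u *\<^sub>R (y - x)) r) 0 \<le> (\<lambda>u. - Fb \<beta> (x + u *\<^sub>R (y - x)) r) 1"
    by (rule start_le_end_if_second_deriv_nonneg[OF DERIV_minus DERIV_minus, OF Fb_line_derivatives[OF inner]])
      (use hess segment_in_ball[OF y] crit in \<open>simp_all add: grad_form_def\<close>)
  then show ?thesis by simp
qed

definition rel_close :: "real \<Rightarrow> real^2 \<Rightarrow> real^2 \<Rightarrow> bool" where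
  "rel_close \<eta> x z \<longleftrightarrow>
     (1-\<eta>) * x$1 \<le> z$1 \<and> z$1 \<le> (1+\<eta>) * x$1 \<and>
     (1-\<eta>) * x$2 \<le> z$2 \<and> z$2 \<le> (1+\<eta>) * x$2 \<and>
     (1-\<eta>) * (1 - x$1 - x$2) \<le> 1 - z$1 - z$2 \<and> 1 - z$1 - z$2 \<le> (1+\<eta>) * (1 - x$1 - x$2)"

lemma rel_close_ball:
  assumes x: "x \<in> Xi_interior" and "0 < \<eta>"
  obtains e where "0 < e" "\<And>z. z \<in> ball x e \<Longrightarrow> rel_close \<eta> x z"
proof
  define e where "e = \<eta> * Min {x$1, x$2, 1 - x$1 - x$2} / 2"
  have pos: "0 < x$1" "0 < x$2" "0 < 1 - x$1 - x$2" using x by (auto simp: Xi_interior_def)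
  then show "0 < e" using \<open>0 < \<eta>\<close> by (simp add: e_def)
  have e: "2 * e \<le> \<eta> * x$1" "2 * e \<le> \<eta> * x$2" "2 * e \<le> \<eta> * (1 - x$1 - x$2)"
    using \<open>0 < \<eta>\<close> by (simp_all add: e_def)
  fix z assume "z \<in> ball x e"
  then have "\<bar>z$1 - x$1\<bar> < e" "\<bar>z$2 - x$2\<bar> < e"
    using component_le_norm_cart[of "z - x"] by (auto simp: dist_norm norm_minus_commute intro: le_less_trans)
  with e show "rel_close \<eta> x z"
    unfolding rel_close_def by (simp add: algebra_simps abs_less_iff)
qed

lemma rel_close_in_Xi_interior:
  assumes "x \<in> Xi_interior" "rel_close \<eta> x z" "\<eta> < 1"
  shows "z \<in> Xi_interior"
proof -
  have "0 < (1-\<eta>) * x$1" "0 < (1-\<eta>) * x$2" "0 < (1-\<eta>) * (1 - x$1 - x$2)"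
    using assms(1,3) by (simp_all add: Xi_interior_def)
  with assms(2) show ?thesis
    unfolding rel_close_def Xi_interior_def by auto
qed

lemma entropy_form_rel_close:
  assumes x: "x \<in> Xi_interior" and close: "rel_close \<eta> x z" and "\<eta> < 1"
  shows "entropy_form x d \<le> (1+\<eta>) * entropy_form z d"
    and "(1-\<eta>) * entropy_form z d \<le> entropy_form x d"
proof -
  have pos: "0 < x$1" "0 < x$2" "0 < 1 - x$1 - x$2" using x by (auto simp: Xi_interior_def)
  have zpos: "0 < z$1" "0 < z$2" "0 < 1 - z$1 - z$2"
    using rel_close_in_Xi_interior[OF assms] by (auto simp: Xi_interior_def)
  show "entropy_form x d \<le> (1+\<eta>) * entropy_form z d"
    using scaled_div_le[of "(d$1)^2" "x$1" "z$1" 1 "1+\<eta>"] scaled_div_le[of "(d$2)^2" "x$2" "z$2" 1 "1+\<eta>"]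
      scaled_div_le[of "(d$1 + d$2)^2" "1 - x$1 - x$2" "1 - z$1 - z$2" 1 "1+\<eta>"] close pos zpos
    unfolding entropy_form_def rel_close_def by (simp add: algebra_simps)
  show "(1-\<eta>) * entropy_form z d \<le> entropy_form x d"
    using scaled_div_le[of "(d$1)^2" "z$1" "x$1" "1-\<eta>" 1] scaled_div_le[of "(d$2)^2" "z$2" "x$2" "1-\<eta>" 1]
      scaled_div_le[of "(d$1 + d$2)^2" "1 - z$1 - z$2" "1 - x$1 - x$2" "1-\<eta>" 1] close pos zpos
    unfolding entropy_form_def rel_close_def by (simp add: algebra_simps)
qed

lemma hess_form_nonneg_near:
  assumes x: "x \<in> Xi_interior" and "0 < \<beta>" "0 < c"
    and lower: "\<And>d. c * interaction_form d \<le> hess_form \<beta> x d"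
  obtains e where "0 < e" "ball x e \<subseteq> Xi_interior" "\<And>z d. z \<in> ball x e \<Longrightarrow> 0 \<le> hess_form \<beta> z d"
proof -
  define \<eta> where "\<eta> = min c (1/2)"
  have \<eta>: "0 < \<eta>" "\<eta> \<le> c" "\<eta> < 1" using \<open>0 < c\<close> by (auto simp: \<eta>_def)
  obtain e where e: "0 < e" "\<And>z. z \<in> ball x e \<Longrightarrow> rel_close \<eta> x z"
    using rel_close_ball[OF x \<open>0 < \<eta>\<close>] by blast
  show thesis
  proof (rule that[OF e(1)])
    show "ball x e \<subseteq> Xi_interior" using rel_close_in_Xi_interior[OF x e(2) \<eta>(3)] by blast
    fix z d assume "z \<in> ball x e"
    then have close: "rel_close \<eta> x z" by (rule e(2))
    have "(1+\<eta>) * interaction_form d \<le> (1+c) * interaction_form d"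
      using \<eta> interaction_form_nonneg by (intro mult_right_mono) auto
    also have "\<dots> \<le> entropy_form x d / \<beta>"
      using lower[of d] by (simp add: hess_form_eq algebra_simps)
    also have "\<dots> \<le> (1+\<eta>) * (entropy_form z d / \<beta>)"
      using divide_right_mono[OF entropy_form_rel_close(1)[OF x close \<eta>(3)], of \<beta>] \<open>0 < \<beta>\<close>
      by simp
    finally have "interaction_form d \<le> entropy_form z d / \<beta>"
      by (rule mult_left_le_imp_le) (use \<eta> in simp)
    then show "0 \<le> hess_form \<beta> z d" by (simp add: hess_form_eq)
  qed
qed

lemma hess_form_nonpos_near:
  assumes x: "x \<in> Xi_interior" and "0 < \<beta>" "0 < c"
    and upper: "\<And>d. hess_form \<beta> x d \<le> - c * interaction_form d"
  obtains e where "0 < e" "ball x e \<subseteq> Xi_interior" "\<And>z d. z \<in> ball x e \<Longrightarrow> hess_form \<beta> z d \<le> 0"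
proof -
  define \<eta> where "\<eta> = min c (1/2)"
  have \<eta>: "0 < \<eta>" "\<eta> \<le> c" "\<eta> < 1" using \<open>0 < c\<close> by (auto simp: \<eta>_def)
  obtain e where e: "0 < e" "\<And>z. z \<in> ball x e \<Longrightarrow> rel_close \<eta> x z"
    using rel_close_ball[OF x \<open>0 < \<eta>\<close>] by blast
  show thesis
  proof (rule that[OF e(1)])
    show "ball x e \<subseteq> Xi_interior" using rel_close_in_Xi_interior[OF x e(2) \<eta>(3)] by blast
    fix z d assume "z \<in> ball x e"
    then have close: "rel_close \<eta> x z" by (rule e(2))
    have "(1-\<eta>) * (entropy_form z d / \<beta>) \<le> entropy_form x d / \<beta>"
      using divide_right_mono[OF entropy_form_rel_close(2)[OF x close \<eta>(3)], of \<beta>] \<open>0 < \<beta>\<close>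
      by simp
    also have "\<dots> \<le> (1-c) * interaction_form d"
      using upper[of d] by (simp add: hess_form_eq algebra_simps)
    also have "\<dots> \<le> (1-\<eta>) * interaction_form d"
      using \<eta> interaction_form_nonneg by (intro mult_right_mono) auto
    finally have "entropy_form z d / \<beta> \<le> interaction_form d"
      by (rule mult_left_le_imp_le) (use \<eta> in simp)
    then show "hess_form \<beta> z d \<le> 0" by (simp add: hess_form_eq)
  qed
qed

section \<open>Critical points on the diagonal\<close>

lemma is_eigenvalue_sym_2x2:
  fixes H :: "real^2^2"
  assumes H: "H $ 1 $ 1 = a" "H $ 1 $ 2 = b" "H $ 2 $ 1 = b" "H $ 2 $ 2 = a"
  shows "is_eigenvalue H (a + b)" and "is_eigenvalue H (a - b)"
proof -
  have nonzero: "pt 1 s \<noteq> 0" for s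
  proof
    assume "pt 1 s = 0"
    then have "pt 1 s $ 1 = (0::real^2) $ 1" by simp
    then show False by simp
  qed
  have "H *v pt 1 1 = (a + b) *\<^sub>R pt 1 1" "H *v pt 1 (-1) = (a - b) *\<^sub>R pt 1 (-1)"
    by (simp_all add: vec_eq_iff forall_2 matrix_vector_mult_def sum_2 H)
  with nonzero show "is_eigenvalue H (a + b)" "is_eigenvalue H (a - b)"
    unfolding is_eigenvalue_def by blast+
qed

definition eig_diag :: "real \<Rightarrow> real \<Rightarrow> real" where
  "eig_diag \<beta> t = -9/2 + (1/\<beta>) * (1/t + 2/(1 - 2*t))"

definition eig_antidiag :: "real \<Rightarrow> real \<Rightarrow> real" where
  "eig_antidiag \<beta> t = -3/2 + (1/\<beta>) * (1/t)"

lemma hess_sym_eigs: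
  "hess11 \<beta> t t + hess12 \<beta> t t = eig_diag \<beta> t"
  "hess11 \<beta> t t - hess12 \<beta> t t = eig_antidiag \<beta> t"
proof -
  have "1 - t - t = 1 - 2*t" "2 / (1 - 2*t) = 1/(1 - 2*t) + 1/(1 - 2*t)" by simp_all
  then show "hess11 \<beta> t t + hess12 \<beta> t t = eig_diag \<beta> t" "hess11 \<beta> t t - hess12 \<beta> t t = eig_antidiag \<beta> t"
    unfolding hess11_def hess12_def eig_diag_def eig_antidiag_def by (simp_all only:) (simp_all add: ring_distribs)
qed

lemma hess_form_sym:
  "hess_form \<beta> (pt t t) d = eig_diag \<beta> t * (d$1 + d$2)^2 / 2 + eig_antidiag \<beta> t * (d$1 - d$2)^2 / 2"
proof -
  have "hess22 \<beta> t t = hess11 \<beta> t t" by (simp add: hess11_def hess22_def)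
  then show ?thesis
    unfolding hess_sym_eigs[symmetric] by (simp add: hess_form_def power2_eq_square field_simps)
qed

lemma hess_form_sym_lower:
  assumes "0 < eig_diag \<beta> t" "0 < eig_antidiag \<beta> t"
  obtains c where "0 < c" "\<And>d. c * interaction_form d \<le> hess_form \<beta> (pt t t) d"
proof
  define c where "c = min (2/9 * eig_diag \<beta> t) (2/3 * eig_antidiag \<beta> t)"
  show "0 < c" using assms by (simp add: c_def)
  fix d :: "real^2"
  have "9/4 * c \<le> eig_diag \<beta> t / 2" "3/4 * c \<le> eig_antidiag \<beta> t / 2" by (simp_all add: c_def)
  then have "9/4 * c * (d$1 + d$2)^2 + 3/4 * c * (d$1 - d$2)^2
      \<le> eig_diag \<beta> t / 2 * (d$1 + d$2)^2 + eig_antidiag \<beta> t / 2 * (d$1 - d$2)^2"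
    by (intro add_mono mult_right_mono) simp_all
  then show "c * interaction_form d \<le> hess_form \<beta> (pt t t) d"
    by (simp add: hess_form_sym interaction_form_eq algebra_simps)
qed

lemma hess_form_sym_upper:
  assumes "eig_diag \<beta> t < 0" "eig_antidiag \<beta> t < 0"
  obtains c where "0 < c" "\<And>d. hess_form \<beta> (pt t t) d \<le> - c * interaction_form d"
proof
  define c where "c = min (- 2/9 * eig_diag \<beta> t) (- 2/3 * eig_antidiag \<beta> t)"
  show "0 < c" using assms by (simp add: c_def)
  fix d :: "real^2"
  have "eig_diag \<beta> t / 2 \<le> - 9/4 * c" "eig_antidiag \<beta> t / 2 \<le> - 3/4 * c" by (simp_all add: c_def)
  then have "eig_diag \<beta> t / 2 * (d$1 + d$2)^2 + eig_antidiag \<beta> t / 2 * (d$1 - d$2)^2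
      \<le> - 9/4 * c * (d$1 + d$2)^2 + - 3/4 * c * (d$1 - d$2)^2"
    by (intro add_mono mult_right_mono) simp_all
  then show "hess_form \<beta> (pt t t) d \<le> - c * interaction_form d"
    by (simp add: hess_form_sym interaction_form_eq algebra_simps)
qed

lemma local_min_at_sym_point:
  assumes t: "0 < t" "t < 1/2" and "0 < \<beta>" and crit: "grad1 \<beta> r t t = 0"
    and pos: "0 < eig_diag \<beta> t" "0 < eig_antidiag \<beta> t"
  shows "local_min_on (\<lambda>x. Fb \<beta> x r) Xi (pt t t)"
proof -
  obtain c where c: "0 < c" "\<And>d. c * interaction_form d \<le> hess_form \<beta> (pt t t) d"
    using hess_form_sym_lower[OF pos] by blast
  obtain e where e: "0 < e" "ball (pt t t) e \<subseteq> Xi_interior"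
      "\<And>z d. z \<in> ball (pt t t) e \<Longrightarrow> 0 \<le> hess_form \<beta> z d"
    using hess_form_nonneg_near[OF pt_in_Xi_interior[OF t] \<open>0 < \<beta>\<close> c] by blast
  have crit2: "grad2 \<beta> r t t = 0" using crit by (simp add: grad2_sym)
  show ?thesis
    unfolding local_min_on_def
  proof (intro conjI exI[of _ e] ballI impI)
    show "pt t t \<in> Xi" using pt_in_Xi_interior[OF t] Xi_interior_subset by blast
    fix y assume "dist y (pt t t) < e"
    then have "y \<in> ball (pt t t) e" by (simp add: dist_commute)
    from Fb_le_on_ball[OF e(2) this] crit crit2 e(3)
    show "Fb \<beta> (pt t t) r \<le> Fb \<beta> y r" by simp
  qed (rule e(1))
qed

lemma local_max_at_sym_point:
  assumes t: "0 < t" "t < 1/2" and "0 < \<beta>" and crit: "grad1 \<beta> r t t = 0"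
    and neg: "eig_diag \<beta> t < 0" "eig_antidiag \<beta> t < 0"
  shows "local_max_on (\<lambda>x. Fb \<beta> x r) Xi (pt t t)"
proof -
  obtain c where c: "0 < c" "\<And>d. hess_form \<beta> (pt t t) d \<le> - c * interaction_form d"
    using hess_form_sym_upper[OF neg] by blast
  obtain e where e: "0 < e" "ball (pt t t) e \<subseteq> Xi_interior"
      "\<And>z d. z \<in> ball (pt t t) e \<Longrightarrow> hess_form \<beta> z d \<le> 0"
    using hess_form_nonpos_near[OF pt_in_Xi_interior[OF t] \<open>0 < \<beta>\<close> c] by blast
  have crit2: "grad2 \<beta> r t t = 0" using crit by (simp add: grad2_sym)
  show ?thesis
    unfolding local_max_on_def
  proof (intro conjI exI[of _ e] ballI impI)
    show "pt t t \<in> Xi" using pt_in_Xi_interior[OF t] Xi_interior_subset by blast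
    fix y assume "dist y (pt t t) < e"
    then have "y \<in> ball (pt t t) e" by (simp add: dist_commute)
    from Fb_ge_on_ball[OF e(2) this] crit crit2 e(3)
    show "Fb \<beta> y r \<le> Fb \<beta> (pt t t) r" by simp
  qed (rule e(1))
qed

lemma saddle_at_sym_point:
  assumes t: "0 < t" "t < 1/2" and crit: "grad1 \<beta> r t t = 0"
    and opposite: "eig_diag \<beta> t * eig_antidiag \<beta> t < 0"
  shows "saddle_point (\<lambda>x. Fb \<beta> x r) (pt t t)"
proof -
  let ?H = "hessian (\<lambda>x. Fb \<beta> x r) (pt t t)"
  have "hess22 \<beta> t t = hess11 \<beta> t t" by (simp add: hess11_def hess22_def)
  then have "?H $ 1 $ 1 = hess11 \<beta> t t" "?H $ 1 $ 2 = hess12 \<beta> t t"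
      "?H $ 2 $ 1 = hess12 \<beta> t t" "?H $ 2 $ 2 = hess11 \<beta> t t"
    using hessian_Fb[OF pt_in_Xi_interior[OF t]] by simp_all
  from is_eigenvalue_sym_2x2[OF this]
  have "is_eigenvalue ?H (eig_diag \<beta> t)" "is_eigenvalue ?H (eig_antidiag \<beta> t)"
    by (simp_all add: hess_sym_eigs)
  moreover have "grad2 \<beta> r t t = 0" using crit by (simp add: grad2_sym)
  then have "critical_point (\<lambda>x. Fb \<beta> x r) (pt t t)"
    using Fb_has_derivative[OF pt_in_Xi_interior[OF t], of \<beta> r] crit by (simp add: critical_point_def)
  moreover have "(0 < eig_diag \<beta> t \<and> eig_antidiag \<beta> t < 0) \<or> (eig_diag \<beta> t < 0 \<and> 0 < eig_antidiag \<beta> t)"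
    using opposite by (simp add: mult_less_0_iff)
  ultimately show ?thesis
    unfolding saddle_point_def by blast
qed

section \<open>The functions h and f\<close>

definition log_ratio :: "real \<Rightarrow> real" where
  "log_ratio t = ln ((1 - 2*t) / t)"

lemma log_ratio_eq_diff: "0 < t \<Longrightarrow> t < 1/2 \<Longrightarrow> log_ratio t = ln (1 - 2*t) - ln t"
  unfolding log_ratio_def by (simp add: ln_div)

lemma log_ratio_has_derivative:
  assumes "0 < t" "t < 1/2"
  shows "(log_ratio has_real_derivative -1 / (t * (1 - 2*t))) (at t)"
proof -
  have "((\<lambda>t. ln (1 - 2*t) - ln t) has_real_derivative -1 / (t * (1 - 2*t))) (at t)"
    using assms by (auto intro!: derivative_eq_intros simp: field_simps)
  then show ?thesis
    by (rule has_field_derivative_transform_within_open[where S = "{0<..<1/2}"])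
      (use assms in \<open>auto simp: log_ratio_eq_diff\<close>)
qed

lemma log_ratio_pos: "0 < t \<Longrightarrow> t < 1/3 \<Longrightarrow> 0 < log_ratio t"
  unfolding log_ratio_def by (subst ln_gt_zero_iff) (auto simp: field_simps)

lemma log_ratio_neg: "1/3 < t \<Longrightarrow> t < 1/2 \<Longrightarrow> log_ratio t < 0"
  unfolding log_ratio_def by (subst ln_less_zero_iff) (auto simp: field_simps)

lemma log_ratio_third: "log_ratio (1/3) = 0"
  by (simp add: log_ratio_def)

lemma log_ratio_strict_antimono: "strict_antimono_on {0<..<1/2} log_ratio"
  by (rule strict_antimono_on_if_deriv_neg[OF _ log_ratio_has_derivative])
    (auto simp: is_interval_1 divide_neg_pos)

lemma h_fun_eq: "h_fun t = 1 - 3*t - 3*t*(1 - 2*t) * log_ratio t"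
  by (simp add: h_fun_def log_ratio_def)

lemma f_fun_eq: "f_fun r t = 2 / (3*(1 - r - 3*t)) * log_ratio t"
  by (simp add: f_fun_def log_ratio_def)

lemma h_fun_has_derivative:
  assumes "0 < t" "t < 1/2"
  shows "(h_fun has_real_derivative (12*t - 3) * log_ratio t) (at t)"
proof -
  have "3*t*(1 - 2*t) * (-1 / (t * (1 - 2*t))) = -3" using assms by (simp add: field_simps)
  then have "((\<lambda>t. 1 - 3*t - 3*t*(1 - 2*t) * log_ratio t) has_real_derivative (12*t - 3) * log_ratio t) (at t)"
    using assms by (auto intro!: derivative_eq_intros log_ratio_has_derivative simp: algebra_simps)
  then show ?thesis by (simp add: h_fun_eq[abs_def])
qed

lemma h_fun_strict_antimono_low: "strict_antimono_on {0<..1/4} h_fun"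
  by (rule strict_antimono_on_if_deriv_neg[OF _ h_fun_has_derivative])
    (auto simp: is_interval_1 mult_neg_pos log_ratio_pos)

lemma h_fun_strict_mono_mid: "strict_mono_on {1/4..1/3} h_fun"
  by (rule strict_mono_on_if_deriv_pos[OF _ h_fun_has_derivative])
    (auto simp: is_interval_1 log_ratio_pos)

lemma h_fun_strict_antimono_high: "strict_antimono_on {1/3..<1/2} h_fun"
  by (rule strict_antimono_on_if_deriv_neg[OF _ h_fun_has_derivative])
    (auto simp: is_interval_1 mult_pos_neg log_ratio_neg)

lemma h_fun_third: "h_fun (1/3) = 0"
  by (simp add: h_fun_eq log_ratio_third)

lemma h_fun_nonpos:
  assumes "1/4 \<le> t" "t < 1/2"
  shows "h_fun t \<le> 0"
proof (cases "t < 1/3")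
  case True
  then have "h_fun t < h_fun (1/3)"
    using assms by (intro strict_mono_onD[OF h_fun_strict_mono_mid]) auto
  then show ?thesis by (simp add: h_fun_third)
next
  case False
  show ?thesis
  proof (cases "t = 1/3")
    case False
    with \<open>\<not> t < 1/3\<close> have "h_fun t < h_fun (1/3)"
      using assms by (intro monotone_onD[OF h_fun_strict_antimono_high]) auto
    then show ?thesis by (simp add: h_fun_third)
  next
    case True
    then show ?thesis by (simp only: h_fun_third order_refl)
  qed
qed

lemma h_fun_lt: "0 < t \<Longrightarrow> t < 1/3 \<Longrightarrow> h_fun t < 1 - 3*t"
  by (simp add: h_fun_eq log_ratio_pos)

lemma h_fun_tendsto_at_right_0: "(h_fun \<longlongrightarrow> 1) (at_right 0)"
  unfolding h_fun_def by real_asymp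

lemma h_fun_continuous_on: "S \<subseteq> {0<..<1/2} \<Longrightarrow> continuous_on S h_fun"
  by (intro continuous_at_imp_continuous_on ballI DERIV_isCont[OF h_fun_has_derivative]) auto

lemma h_fun_lt_k_fun: "0 < r \<Longrightarrow> r < 1 \<Longrightarrow> h_fun (k_fun r) < r"
  using h_fun_lt[of "k_fun r"] by (simp add: k_fun_def diff_divide_distrib)

lemma m0_exists:
  assumes "0 < r" "r < 1"
  shows "\<exists>t. 0 < t \<and> t < k_fun r \<and> h_fun t = r"
proof (rule IVT_eventually_at_right)
  show "0 < k_fun r" "continuous_on {0<..k_fun r} h_fun"
    using assms by (auto simp: k_fun_def intro!: h_fun_continuous_on)
  show "h_fun (k_fun r) < r" using h_fun_lt_k_fun assms by blast
  show "\<forall>\<^sub>F t in at_right 0. r < h_fun t"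
    using order_tendstoD(1)[OF h_fun_tendsto_at_right_0] \<open>r < 1\<close> by blast
qed

lemma h_fun_pos_imp_lt_quarter: "0 < t \<Longrightarrow> t < 1/2 \<Longrightarrow> 0 < h_fun t \<Longrightarrow> t < 1/4"
  using h_fun_nonpos[of t] by linarith

lemma m0_eq:
  assumes "0 < r" "0 < t" "t < k_fun r" "h_fun t = r"
  shows "m0 r = t"
  unfolding m0_def
proof (rule the_equality)
  fix s assume s: "0 < s \<and> s < k_fun r \<and> h_fun s = r"
  have "s < 1/4" "t < 1/4"
    using h_fun_pos_imp_lt_quarter[of s] h_fun_pos_imp_lt_quarter[of t] s assms
    by (auto simp: k_fun_def)
  then show "s = t"
    using strict_antimono_iff_antimono[THEN iffD1, OF h_fun_strict_antimono_low] s assms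
    by (auto dest: inj_onD)
qed (use assms in auto)

lemma m0_props:
  assumes "0 < r" "r < 1"
  shows "0 < m0 r" "m0 r < k_fun r" "h_fun (m0 r) = r" "m0 r < 1/4"
proof -
  obtain t where t: "0 < t" "t < k_fun r" "h_fun t = r" using m0_exists[OF assms] by blast
  with m0_eq assms show "0 < m0 r" "m0 r < k_fun r" "h_fun (m0 r) = r" by auto
  then show "m0 r < 1/4" using h_fun_pos_imp_lt_quarter[of "m0 r"] assms by (auto simp: k_fun_def)
qed

lemma h_fun_gt_below_m0:
  assumes "0 < r" "r < 1" "0 < t" "t < m0 r"
  shows "r < h_fun t"
  using monotone_onD[OF h_fun_strict_antimono_low, of t "m0 r"] m0_props[OF assms(1,2)] assms by auto

lemma h_fun_lt_above_m0:
  assumes "0 < r" "r < 1" "m0 r < t" "t < 1/2"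
  shows "h_fun t < r"
proof (cases "t \<le> 1/4")
  case True
  then show ?thesis
    using monotone_onD[OF h_fun_strict_antimono_low, of "m0 r" t] m0_props[OF assms(1,2)] assms by auto
next
  case False
  then show ?thesis using h_fun_nonpos[of t] assms by linarith
qed

lemma m0_strict_antimono:
  assumes "0 < r" "r < r'" "r' < 1"
  shows "m0 r' < m0 r"
proof (rule ccontr)
  assume "\<not> m0 r' < m0 r"
  then consider "m0 r = m0 r'" | "m0 r < m0 r'" by linarith
  then show False
  proof cases
    case 1
    then show False using m0_props(3)[of r] m0_props(3)[of r'] assms by auto
  next
    case 2
    then have "h_fun (m0 r') < r"
      using h_fun_lt_above_m0[of r "m0 r'"] m0_props[of r'] assms by auto
    then show False using m0_props(3)[of r'] assms by auto
  qed
qed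

lemma m0_h_fun:
  assumes "0 < t" "t < 1/3" "0 < h_fun t"
  shows "m0 (h_fun t) = t"
  using assms h_fun_lt[of t] by (intro m0_eq) (auto simp: k_fun_def)

lemma isCont_m0:
  assumes "0 < r" "r < 1"
  shows "isCont m0 r"
proof -
  define a where "a = m0 r / 2"
  define b where "b = m0 (r/2)"
  have ab: "0 < a" "a < m0 r" "m0 r < b" "b < 1/4" "h_fun b = r/2"
    using m0_props[OF assms] m0_props[of "r/2"] m0_strict_antimono[of "r/2" r] assms
    by (auto simp: a_def b_def)
  have "r < h_fun a" using h_fun_gt_below_m0[OF assms] ab by simp
  have cont: "continuous_on {a..b} h_fun" by (rule h_fun_continuous_on) (use ab in auto)
  have inv: "\<forall>x\<in>{a..b}. m0 (h_fun x) = x"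
  proof
    fix x assume x: "x \<in> {a..b}"
    have "r/2 \<le> h_fun x"
      using monotone_onD[OF h_fun_strict_antimono_low, of x b] x ab by (cases "x = b") auto
    then show "m0 (h_fun x) = x" using x ab assms by (intro m0_h_fun) auto
  qed
  have "{r/2<..<h_fun a} \<subseteq> h_fun ` {a..b}"
  proof
    fix y assume y: "y \<in> {r/2<..<h_fun a}"
    obtain x where "a \<le> x" "x \<le> b" "h_fun x = y"
      using IVT2'[of h_fun b y a, OF _ _ _ cont] y ab by force
    then show "y \<in> h_fun ` {a..b}" by force
  qed
  from continuous_on_subset[OF continuous_on_inv[OF cont compact_Icc inv] this]
  show ?thesis
    using \<open>r < h_fun a\<close> assms by (simp add: continuous_on_eq_continuous_at)
qed

lemma f_fun_has_derivative:
  assumes "0 < t" "t < 1/2" "1 - r - 3*t \<noteq> 0"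
  shows "(f_fun r has_real_derivative 2 * (r - h_fun t) / (3*t*(1 - 2*t)*(1 - r - 3*t)^2)) (at t)"
proof -
  define D where "D = 1 - r - 3*t"
  define P where "P = t * (1 - 2*t)"
  have "D \<noteq> 0" "P \<noteq> 0" using assms by (auto simp: D_def P_def)
  have "((\<lambda>t. 1 - r - 3*t) has_real_derivative -3) (at t)"
    by (auto intro!: derivative_eq_intros)
  from DERIV_inverse_fun[OF this] \<open>D \<noteq> 0\<close>
  have "((\<lambda>t. inverse (1 - r - 3*t)) has_real_derivative 3 / D^2) (at t)"
    by (simp add: D_def power2_eq_square divide_inverse)
  from DERIV_mult[OF DERIV_cmult[OF this, of "2/3"] log_ratio_has_derivative[OF assms(1,2)]]
  have "((\<lambda>t. 2/3 * inverse (1 - r - 3*t) * log_ratio t) has_real_derivative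
      2/3 * (3 / D^2) * log_ratio t + -1 / P * (2/3 * inverse D)) (at t)"
    by (simp only: D_def P_def)
  also have "2/3 * (3 / D^2) * log_ratio t + -1 / P * (2/3 * inverse D)
      = 2 * (3 * P * log_ratio t - D) / (3 * P * D^2)"
    using \<open>D \<noteq> 0\<close> \<open>P \<noteq> 0\<close> by (simp add: field_simps power2_eq_square)
  also have "3 * P * log_ratio t - D = r - h_fun t"
    by (simp add: h_fun_eq D_def P_def algebra_simps)
  also have "3 * P * D^2 = 3*t*(1 - 2*t)*(1 - r - 3*t)^2"
    by (simp add: D_def P_def)
  also have "(\<lambda>t. 2/3 * inverse (1 - r - 3*t) * log_ratio t) = f_fun r"
    by (rule ext) (simp only: f_fun_eq divide_inverse inverse_mult_distrib mult.assoc)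
  finally show ?thesis .
qed

lemma f_fun_strict_antimono_low:
  assumes "0 < r" "r < 1"
  shows "strict_antimono_on {0<..m0 r} (f_fun r)"
proof (rule strict_antimono_on_if_deriv_neg[OF _ f_fun_has_derivative])
  fix t :: real assume t: "t \<in> interior {0<..m0 r}"
  then show "2 * (r - h_fun t) / (3*t*(1 - 2*t)*(1 - r - 3*t)^2) < 0"
    using h_fun_gt_below_m0[OF assms] m0_props[OF assms]
    by (intro divide_neg_pos) (auto simp: k_fun_def)
qed (use m0_props[OF assms] assms in \<open>auto simp: is_interval_1 k_fun_def\<close>)

lemma f_fun_strict_mono_mid:
  assumes "0 < r" "r < 1"
  shows "strict_mono_on {m0 r..<k_fun r} (f_fun r)"
proof (rule strict_mono_on_if_deriv_pos[OF _ f_fun_has_derivative])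
  fix t :: real assume t: "t \<in> interior {m0 r..<k_fun r}"
  then show "0 < 2 * (r - h_fun t) / (3*t*(1 - 2*t)*(1 - r - 3*t)^2)"
    using h_fun_lt_above_m0[OF assms] m0_props[OF assms] assms
    by (intro divide_pos_pos) (auto simp: k_fun_def)
qed (use m0_props[OF assms] assms in \<open>auto simp: is_interval_1 k_fun_def\<close>)

lemma f_fun_strict_mono_high:
  assumes "0 < r"
  shows "strict_mono_on {1/3..<1/2} (f_fun r)"
proof (rule strict_mono_on_if_deriv_pos[OF _ f_fun_has_derivative])
  fix t :: real assume t: "t \<in> interior {1/3..<1/2}"
  then show "0 < 2 * (r - h_fun t) / (3*t*(1 - 2*t)*(1 - r - 3*t)^2)"
    using h_fun_nonpos[of t] assms by (intro divide_pos_pos) auto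
qed (use assms in \<open>auto simp: is_interval_1\<close>)

lemma f_fun_continuous_on:
  assumes "S \<subseteq> {0<..<1/2}" "\<And>t. t \<in> S \<Longrightarrow> 1 - r - 3*t \<noteq> 0"
  shows "continuous_on S (f_fun r)"
  using assms by (intro continuous_at_imp_continuous_on ballI DERIV_isCont[OF f_fun_has_derivative]) auto

lemma f_fun_strict_mono_in_r:
  assumes "0 < t" "t < 1/3" "r < r'" "0 < 1 - r' - 3*t"
  shows "f_fun r t < f_fun r' t"
proof -
  have "2 / (3*(1 - r - 3*t)) < 2 / (3*(1 - r' - 3*t))"
    by (rule divide_strict_left_mono) (use assms in auto)
  then show ?thesis
    unfolding f_fun_eq using log_ratio_pos[OF assms(1,2)] by (rule mult_strict_right_mono)
qed

lemma f_fun_eventually_gt_at_right_0: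
  assumes "0 \<le> r" "r < 1"
  shows "\<forall>\<^sub>F t in at_right 0. c < f_fun r t"
proof -
  have "filterlim log_ratio at_top (at_right 0)"
    unfolding log_ratio_def by real_asymp
  then have "\<forall>\<^sub>F t in at_right 0. 3/2 * \<bar>c\<bar> < log_ratio t"
    unfolding filterlim_at_top_dense by (rule spec)
  moreover have "\<forall>\<^sub>F t in at_right 0. 0 < t \<and> t < k_fun r"
    using assms unfolding eventually_at_right_field by (intro exI[of _ "k_fun r"]) (auto simp: k_fun_def)
  ultimately show ?thesis
  proof eventually_elim
    case (elim t)
    then have D: "0 < 1 - r - 3*t" "1 - r - 3*t \<le> 1" using assms by (auto simp: k_fun_def)
    have "c \<le> 2/3 * (3/2 * \<bar>c\<bar>)" by simp
    also have "\<dots> < 2/3 * log_ratio t" using elim by simp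
    also have "\<dots> \<le> 2 / (3*(1 - r - 3*t)) * log_ratio t"
      using D elim by (intro mult_right_mono) (auto simp: field_simps)
    finally show ?case by (simp add: f_fun_eq)
  qed
qed

lemma f_fun_eventually_gt_at_left_k_fun:
  assumes "0 < r" "r < 1"
  shows "\<forall>\<^sub>F t in at_left (k_fun r). c < f_fun r t"
proof -
  define k where "k = k_fun r"
  have k: "0 < k" "k < 1/3" "1 - r - 3*k = 0" using assms by (auto simp: k_def k_fun_def)
  have L: "0 < log_ratio k" using k by (intro log_ratio_pos) auto
  define \<delta> where "\<delta> = 2 * log_ratio k / (9 * (\<bar>c\<bar> + 1))"
  have "0 < \<delta>" using L by (simp add: \<delta>_def)
  have "((\<lambda>t. k - t) \<longlongrightarrow> 0) (at_left k)"
    by (intro tendsto_eq_intros) auto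
  then have "\<forall>\<^sub>F t in at_left k. k - t < \<delta>"
    using order_tendstoD(2) \<open>0 < \<delta>\<close> by blast
  moreover have "\<forall>\<^sub>F t in at_left k. 0 < t \<and> t < k"
    using k unfolding eventually_at_left_field by (intro exI[of _ 0]) auto
  ultimately show ?thesis
    unfolding k_def[symmetric]
  proof eventually_elim
    case (elim t)
    then have D: "1 - r - 3*t = 3 * (k - t)" "0 < k - t" using k by auto
    have "c < \<bar>c\<bar> + 1" by simp
    also have "\<dots> = 2 * log_ratio k / (9 * \<delta>)"
      using L by (simp add: \<delta>_def)
    also have "\<dots> < 2 * log_ratio k / (9 * (k - t))"
      using D elim L \<open>0 < \<delta>\<close> by (intro divide_strict_left_mono) auto
    also have "\<dots> < 2 * log_ratio t / (9 * (k - t))"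
    proof -
      have "log_ratio k < log_ratio t"
        by (rule monotone_onD[OF log_ratio_strict_antimono]) (use elim k in auto)
      then show ?thesis using D by (intro divide_strict_right_mono) auto
    qed
    also have "\<dots> = f_fun r t"
      by (simp add: f_fun_eq D)
    finally show ?case .
  qed
qed

lemma f_fun_eventually_gt_at_left_half:
  assumes "0 < r"
  shows "\<forall>\<^sub>F t in at_left (1/2). c < f_fun r t"
proof -
  have "filterlim log_ratio at_bot (at_left (1/2))"
    unfolding log_ratio_def by real_asymp
  then have "\<forall>\<^sub>F t in at_left (1/2). log_ratio t < - 3/2 * (r + 1/2) * (\<bar>c\<bar> + 1)"
    unfolding filterlim_at_bot_dense by (rule spec)
  moreover have "\<forall>\<^sub>F t in at_left (1/2). 1/3 < t \<and> t < (1/2::real)"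
    unfolding eventually_at_left_field by (intro exI[of _ "1/3"]) auto
  ultimately show ?thesis
  proof eventually_elim
    case (elim t)
    define D where "D = r + 3*t - 1"
    have D: "0 < D" "D < r + 1/2" using elim assms by (auto simp: D_def)
    have "c < \<bar>c\<bar> + 1" by simp
    also have "\<dots> = 2 / (3 * (r + 1/2)) * (3/2 * (r + 1/2) * (\<bar>c\<bar> + 1))"
      using assms by (simp add: field_simps)
    also have "\<dots> < 2 / (3 * (r + 1/2)) * - log_ratio t"
      using elim assms by (intro mult_strict_left_mono) auto
    also have "\<dots> \<le> 2 / (3 * D) * - log_ratio t"
      using D elim assms log_ratio_neg[of t] by (intro mult_right_mono divide_left_mono) auto
    also have "\<dots> = f_fun r t"
    proof -
      have "1 - r - 3*t = - D" by (simp add: D_def)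
      then show ?thesis by (simp add: f_fun_eq)
    qed
    finally show ?case .
  qed
qed

definition f_min :: "real \<Rightarrow> real" where
  "f_min r = f_fun r (m0 r)"

lemma f_min_less:
  assumes "0 < r" "r < 1" "0 < t" "t < k_fun r" "t \<noteq> m0 r"
  shows "f_min r < f_fun r t"
proof (cases "t < m0 r")
  case True
  then show ?thesis
    using monotone_onD[OF f_fun_strict_antimono_low[OF assms(1,2)], of t "m0 r"] assms
    by (simp add: f_min_def)
next
  case False
  then show ?thesis
    using strict_mono_onD[OF f_fun_strict_mono_mid[OF assms(1,2)], of "m0 r" t] m0_props[OF assms(1,2)] assms
    by (simp add: f_min_def)
qed

lemma f_min_strict_mono:
  assumes "0 < r" "r < r'" "r' < 1"
  shows "f_min r < f_min r'"
proof -
  have m: "0 < m0 r'" "m0 r' < k_fun r'" "m0 r' < m0 r"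
    using m0_props[of r'] m0_strict_antimono[OF assms] assms by auto
  then have "f_min r < f_fun r (m0 r')"
    using assms by (intro f_min_less) (auto simp: k_fun_def)
  also have "\<dots> < f_fun r' (m0 r')"
    using m m0_props(4)[of r'] assms by (intro f_fun_strict_mono_in_r) (auto simp: k_fun_def)
  finally show ?thesis by (simp add: f_min_def)
qed

lemma f_min_continuous_on: "continuous_on {0<..<1} f_min"
proof -
  have m0: "continuous_on {0<..<1} m0"
    by (intro continuous_at_imp_continuous_on ballI isCont_m0) auto
  have pos: "0 < m0 r \<and> m0 r < 1/4 \<and> 0 < 1 - r - 3 * m0 r" if "r \<in> {0<..<1}" for r
    using m0_props[of r] that by (auto simp: k_fun_def)
  have "continuous_on {0<..<1} (\<lambda>r. 2 / (3*(1 - r - 3 * m0 r)) * ln ((1 - 2 * m0 r) / m0 r))"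
    by (intro continuous_intros m0) (auto dest!: pos)
  then show ?thesis unfolding f_min_def f_fun_def .
qed

lemma f_min_less_two: "f_min (1/100) < 2"
proof -
  have "f_min (1/100) < f_fun (1/100) (1/4)"
    using m0_props(4)[of "1/100"] by (intro f_min_less) (auto simp: k_fun_def)
  also have "f_fun (1/100) (1/4) = 50/18 * ln 2"
    by (simp add: f_fun_def)
  also have "\<dots> < 2" using ln2_le_25_over_36 by simp
  finally show ?thesis .
qed

lemma f_min_gt_k_fun:
  assumes "0 < r" "r < 1"
  shows "2 / (3*(1 - r)) * log_ratio (k_fun r) < f_min r"
proof -
  note m = m0_props[OF assms]
  define D where "D = 1 - r - 3 * m0 r"
  have D: "0 < D" "D < 1 - r" using m by (auto simp: D_def k_fun_def)
  have L: "0 < log_ratio (k_fun r)" using assms by (intro log_ratio_pos) (auto simp: k_fun_def)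
  have "log_ratio (k_fun r) < log_ratio (m0 r)"
    using monotone_onD[OF log_ratio_strict_antimono, of "m0 r" "k_fun r"] m assms by (auto simp: k_fun_def)
  moreover have "2 / (3*(1 - r)) < 2 / (3*D)" using D by (intro divide_strict_left_mono) auto
  ultimately have "2 / (3*(1 - r)) * log_ratio (k_fun r) < 2 / (3*D) * log_ratio (m0 r)"
    using D L assms by (intro mult_strict_mono) auto
  then show ?thesis by (simp add: f_min_def f_fun_eq D_def)
qed

lemma f_min_eventually_gt: "\<forall>\<^sub>F r in at_left 1. c < f_min r"
proof -
  have "filterlim (\<lambda>r. 2 / (3*(1 - r)) * log_ratio (k_fun r)) at_top (at_left 1)"
    unfolding log_ratio_def k_fun_def by real_asymp
  then have "\<forall>\<^sub>F r in at_left 1. c < 2 / (3*(1 - r)) * log_ratio (k_fun r)"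
    unfolding filterlim_at_top_dense by (rule spec)
  moreover have "\<forall>\<^sub>F r in at_left 1. 0 < r \<and> r < (1::real)"
    unfolding eventually_at_left_field by (intro exI[of _ 0]) auto
  ultimately show ?thesis
    by eventually_elim (use f_min_gt_k_fun in force)
qed

lemma r2_props:
  assumes "2 < \<beta>"
  shows "0 < r2 \<beta>" "r2 \<beta> < 1" "f_min (r2 \<beta>) = \<beta>"
proof -
  have "continuous_on {1/100..<1} f_min"
    by (rule continuous_on_subset[OF f_min_continuous_on]) auto
  then obtain r where r: "1/100 < r" "r < 1" "f_min r = \<beta>"
    using IVT_eventually_at_left[of "1/100" 1 f_min \<beta>] f_min_less_two f_min_eventually_gt assms by force
  have "r2 \<beta> = r"
    unfolding r2_def
  proof (rule the_equality)
    fix s assume s: "0 < s \<and> s < 1 \<and> f_fun s (m0 s) = \<beta>"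
    show "s = r"
      using f_min_strict_mono[of s r] f_min_strict_mono[of r s] s r
      by (cases s r rule: linorder_cases) (auto simp: f_min_def)
  qed (use r in \<open>auto simp: f_min_def\<close>)
  with r show "0 < r2 \<beta>" "r2 \<beta> < 1" "f_min (r2 \<beta>) = \<beta>" by auto
qed

lemma f_min_lt_of_lt_r2:
  assumes "2 < \<beta>" "0 < r" "r < r2 \<beta>"
  shows "f_min r < \<beta>"
  using f_min_strict_mono[of r "r2 \<beta>"] r2_props[OF assms(1)] assms by simp

lemma p_sol_props:
  assumes "0 < r" "r < 1" "f_min r < \<beta>"
  shows "0 < p_sol \<beta> r" "p_sol \<beta> r < m0 r" "f_fun r (p_sol \<beta> r) = \<beta>"
proof -
  note m = m0_props[OF assms(1,2)]
  have "continuous_on {0<..m0 r} (f_fun r)"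
    using m by (intro f_fun_continuous_on) (auto simp: k_fun_def)
  then obtain t where t: "0 < t" "t < m0 r" "f_fun r t = \<beta>"
    using IVT_eventually_at_right[of 0 "m0 r" "f_fun r" \<beta>] m assms f_fun_eventually_gt_at_right_0
    by (force simp: f_min_def)
  have "p_sol \<beta> r = t"
    unfolding p_sol_def
  proof (rule the_equality)
    fix s assume "0 < s \<and> s < m0 r \<and> f_fun r s = \<beta>"
    with t show "s = t"
      using strict_antimono_iff_antimono[THEN iffD1, OF f_fun_strict_antimono_low[OF assms(1,2)]]
      by (auto dest: inj_onD)
  qed (use t in auto)
  with t show "0 < p_sol \<beta> r" "p_sol \<beta> r < m0 r" "f_fun r (p_sol \<beta> r) = \<beta>" by auto
qed

lemma u_sol_props:
  assumes "0 < r" "r < 1" "f_min r < \<beta>"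
  shows "m0 r < u_sol \<beta> r" "u_sol \<beta> r < k_fun r" "f_fun r (u_sol \<beta> r) = \<beta>"
proof -
  note m = m0_props[OF assms(1,2)]
  have "continuous_on {m0 r..<k_fun r} (f_fun r)"
    using m assms by (intro f_fun_continuous_on) (auto simp: k_fun_def)
  then obtain t where t: "m0 r < t" "t < k_fun r" "f_fun r t = \<beta>"
    using IVT_eventually_at_left[of "m0 r" "k_fun r" "f_fun r" \<beta>] m assms f_fun_eventually_gt_at_left_k_fun
    by (force simp: f_min_def)
  have "u_sol \<beta> r = t"
    unfolding u_sol_def
  proof (rule the_equality)
    fix s assume "m0 r < s \<and> s < k_fun r \<and> f_fun r s = \<beta>"
    with t show "s = t"
      using strict_mono_on_imp_inj_on[OF f_fun_strict_mono_mid[OF assms(1,2)]]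
      by (auto dest: inj_onD)
  qed (use t in auto)
  with t show "m0 r < u_sol \<beta> r" "u_sol \<beta> r < k_fun r" "f_fun r (u_sol \<beta> r) = \<beta>" by auto
qed

lemma q_sol_props:
  assumes "0 < r" "0 < \<beta>"
  shows "1/3 < q_sol \<beta> r" "q_sol \<beta> r < 1/2" "f_fun r (q_sol \<beta> r) = \<beta>"
proof -
  have "continuous_on {1/3..<1/2} (f_fun r)"
    using assms by (intro f_fun_continuous_on) auto
  moreover have "f_fun r (1/3) = 0" by (simp add: f_fun_eq log_ratio_third)
  ultimately obtain t where t: "1/3 < t" "t < 1/2" "f_fun r t = \<beta>"
    using IVT_eventually_at_left[of "1/3" "1/2" "f_fun r" \<beta>] assms f_fun_eventually_gt_at_left_half
    by force
  have "q_sol \<beta> r = t"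
    unfolding q_sol_def
  proof (rule the_equality)
    fix s assume "1/3 < s \<and> s < 1/2 \<and> f_fun r s = \<beta>"
    with t show "s = t"
      using strict_mono_on_imp_inj_on[OF f_fun_strict_mono_high[OF assms(1)]]
      by (auto dest: inj_onD)
  qed (use t in auto)
  with t show "1/3 < q_sol \<beta> r" "q_sol \<beta> r < 1/2" "f_fun r (q_sol \<beta> r) = \<beta>" by auto
qed

lemma r1_eq:
  assumes "2 < \<beta>"
  shows "r1 \<beta> = 1 - 3 * (2/(3*\<beta>)) - 2/(3*\<beta>) * log_ratio (2/(3*\<beta>))"
proof -
  have "(1 - 2 * (2/(3*\<beta>))) / (2/(3*\<beta>)) = 3*\<beta>/2 - 2" using assms by (simp add: field_simps)
  then show ?thesis using assms by (simp add: r1_def log_ratio_def)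
qed

(* r_1 is the field at which t = 2/(3 beta), where the antidiagonal eigenvalue changes sign,
   solves f_r(t) = beta. *)
lemma r1_facts:
  assumes "2 < \<beta>"
  defines "a \<equiv> 2/(3*\<beta>)"
  shows "0 < a" "a < 1/3" "0 < 1 - r1 \<beta> - 3*a" "f_fun (r1 \<beta>) a = \<beta>" "h_fun a < r1 \<beta>"
proof -
  show a: "0 < a" "a < 1/3" using assms by (auto simp: a_def field_simps)
  have L: "0 < log_ratio a" using a by (rule log_ratio_pos)
  have D: "1 - r1 \<beta> - 3*a = a * log_ratio a"
    using r1_eq[OF assms(1)] by (simp add: a_def)
  then show "0 < 1 - r1 \<beta> - 3*a" using a L by simp
  have "f_fun (r1 \<beta>) a = 2 / (3*a)"
    using a L by (simp add: f_fun_eq D)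
  then show "f_fun (r1 \<beta>) a = \<beta>" using assms by (simp add: a_def)
  have "h_fun a - r1 \<beta> = a * log_ratio a * (6*a - 2)"
    using D by (simp add: h_fun_eq algebra_simps)
  moreover have "a * log_ratio a * (6*a - 2) < 0" using a L by (intro mult_pos_neg) auto
  ultimately show "h_fun a < r1 \<beta>" by simp
qed

lemma r1_pos:
  assumes "2 < \<beta>"
  shows "0 < r1 \<beta>"
proof -
  define y where "y = 3*\<beta>/2 - 2"
  have "1 < y" using assms by (simp add: y_def)
  then have "ln y < y - 1"
    using ln_le_minus_one[of y] ln_eq_minus_one[of y] by fastforce
  then have "2/(3*\<beta>) * ln y < 2/(3*\<beta>) * (y - 1)"
    using assms by (intro mult_strict_left_mono) auto
  moreover have "2/(3*\<beta>) * (y - 1) = 1 - 2/\<beta>" using assms by (simp add: y_def field_simps)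
  ultimately show ?thesis by (simp add: r1_def y_def)
qed

lemma r1_lt_r2:
  assumes "2 < \<beta>"
  shows "r1 \<beta> < r2 \<beta>"
proof -
  define a where "a = 2/(3*\<beta>)"
  note a = r1_facts[OF assms, folded a_def]
  have r1: "0 < r1 \<beta>" "r1 \<beta> < 1" using r1_pos[OF assms] a(1,3) by linarith+
  have "a \<noteq> m0 (r1 \<beta>)" using a(5) m0_props(3)[OF r1] by auto
  then have "f_min (r1 \<beta>) < \<beta>"
    using f_min_less[OF r1 a(1)] a(3,4) by (simp add: k_fun_def)
  then show ?thesis
    using f_min_strict_mono[of "r2 \<beta>" "r1 \<beta>"] r2_props[OF assms] r1
    by (cases "r1 \<beta>" "r2 \<beta>" rule: linorder_cases) auto
qed

section \<open>The three families of critical points\<close>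

lemma grad1_sym_zero:
  assumes "0 < t" "t < 1/2" "\<beta> \<noteq> 0" "1 - r - 3*t \<noteq> 0" "f_fun r t = \<beta>"
  shows "grad1 \<beta> r t t = 0"
proof -
  define D where "D = 1 - r - 3*t"
  have "\<beta> = 2 / (3*D) * log_ratio t"
    using assms(5) by (simp add: f_fun_eq D_def)
  then have L: "1/\<beta> * log_ratio t = 3/2 * D"
    using assms(3,4) by (auto simp: D_def field_simps)
  have "ln (3*t) = ln 3 + ln t" "ln (3*(1 - 2*t)) = ln 3 + ln (1 - 2*t)"
    by (rule ln_mult_pos; use assms in simp)+
  moreover have "1 - t - t = 1 - 2*t" by simp
  ultimately have "ln (3*t) - ln (3*(1 - t - t)) = - log_ratio t"
    using log_ratio_eq_diff[OF assms(1,2)] by simp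
  then have "grad1 \<beta> r t t = -(3/2)*(t - (1 - t - t)) - 1/\<beta> * log_ratio t - 3*r/2"
    unfolding grad1_def by simp
  also have "\<dots> = 0" unfolding L D_def by (simp add: field_simps)
  finally show ?thesis .
qed

lemma eig_diag_at_solution:
  assumes "0 < t" "t < 1/2" "1 - r - 3*t \<noteq> 0" "log_ratio t \<noteq> 0" "f_fun r t = \<beta>"
  shows "eig_diag \<beta> t = 3 * (h_fun t - r) / (2 * log_ratio t * (t * (1 - 2*t)))"
proof -
  define D where "D = 1 - r - 3*t"
  define P where "P = t * (1 - 2*t)"
  have nz: "D \<noteq> 0" "P \<noteq> 0" using assms by (auto simp: D_def P_def)
  have "\<beta> = 2 * log_ratio t / (3*D)"
    using assms(5) by (simp add: f_fun_eq D_def)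
  then have inv_\<beta>: "1/\<beta> = 3 * D / (2 * log_ratio t)"
    by simp
  have "1/t + 2/(1 - 2*t) = 1/P" using assms(1,2) by (simp add: P_def field_simps)
  then have "eig_diag \<beta> t = -9/2 + 3 * D / (2 * log_ratio t) * (1/P)"
    by (simp add: eig_diag_def inv_\<beta>)
  also have "\<dots> = 3 * (D - 3 * P * log_ratio t) / (2 * log_ratio t * P)"
    using nz assms(4) by (simp add: field_simps)
  also have "D - 3 * P * log_ratio t = h_fun t - r"
    by (simp add: h_fun_eq D_def P_def algebra_simps)
  finally show ?thesis by (simp add: P_def)
qed

lemma eig_antidiag_sign:
  assumes "0 < \<beta>" "0 < t"
  shows "0 < eig_antidiag \<beta> t \<longleftrightarrow> \<beta> * t < 2/3"
    and "eig_antidiag \<beta> t < 0 \<longleftrightarrow> 2/3 < \<beta> * t"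
  using assms by (simp_all add: eig_antidiag_def field_simps)

lemma beta_mul_lt_of_h_fun_gt:
  assumes "0 < t" "t < 1/3" "r < h_fun t" "f_fun r t = \<beta>"
  shows "\<beta> * t < 2/3"
proof -
  define D where "D = 1 - r - 3*t"
  have L: "0 < log_ratio t" using assms(1,2) by (rule log_ratio_pos)
  have "t * log_ratio t \<le> 3*t*(1 - 2*t) * log_ratio t"
    using assms(1,2) L by (intro mult_right_mono) auto
  also have "\<dots> < D" using assms(3) by (simp add: h_fun_eq D_def)
  finally have tL: "t * log_ratio t < D" .
  have "0 < D" using tL mult_pos_pos[OF assms(1) L] by linarith
  have "\<beta> = 2 * log_ratio t / (3 * D)"
    using assms(4) by (simp add: f_fun_eq D_def)
  then have \<beta>D: "3 * \<beta> * D = 2 * log_ratio t"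
    using \<open>0 < D\<close> by simp
  have "(3 * \<beta> * t) * D = t * (3 * \<beta> * D)" by (simp add: algebra_simps)
  also have "\<dots> < 2 * D" using tL by (simp add: \<beta>D)
  finally have "3 * \<beta> * t < 2" using \<open>0 < D\<close> by simp
  then show ?thesis by simp
qed

lemma m0_pt_local_min:
  assumes "2 < \<beta>" "0 < r" "r < r2 \<beta>"
  shows "local_min_on (\<lambda>x. Fb \<beta> x r) Xi (m0_pt \<beta> r)"
proof -
  have r: "0 < r" "r < 1" using assms r2_props[OF assms(1)] by auto
  define p where "p = p_sol \<beta> r"
  note pp = p_sol_props[OF r f_min_lt_of_lt_r2[OF assms], folded p_def]
  note m = m0_props[OF r]
  have p: "0 < p" "p < 1/3" "0 < 1 - r - 3*p" using pp m by (auto simp: k_fun_def)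
  have h: "r < h_fun p" using h_fun_gt_below_m0[OF r] pp by simp
  have L: "0 < log_ratio p" using p by (intro log_ratio_pos) auto
  have "eig_diag \<beta> p = 3 * (h_fun p - r) / (2 * log_ratio p * (p * (1 - 2*p)))"
    using p L pp(3) by (intro eig_diag_at_solution) auto
  then have "0 < eig_diag \<beta> p"
    using h L p by (auto intro!: divide_pos_pos mult_pos_pos)
  moreover have "0 < eig_antidiag \<beta> p"
    using assms(1) p beta_mul_lt_of_h_fun_gt[OF p(1,2) h pp(3)] by (simp add: eig_antidiag_sign)
  ultimately show ?thesis
    unfolding m0_pt_def p_def[symmetric]
    using assms(1) p pp(3) by (intro local_min_at_sym_point grad1_sym_zero) auto
qed

lemma sigma0_pt_saddle:
  assumes "2 < \<beta>" "0 < r"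
  shows "saddle_point (\<lambda>x. Fb \<beta> x r) (sigma0_pt \<beta> r)"
proof -
  define q where "q = q_sol \<beta> r"
  have "0 < \<beta>" using assms(1) by simp
  note qq = q_sol_props[OF assms(2) this, folded q_def]
  have q: "0 < q" "q < 1/2" "1 - r - 3*q < 0" using qq assms by auto
  have L: "log_ratio q < 0" using qq by (intro log_ratio_neg) auto
  have "h_fun q \<le> 0" using qq by (intro h_fun_nonpos) auto
  then have "3 * (h_fun q - r) < 0" using assms(2) by simp
  moreover have "2 * log_ratio q * (q * (1 - 2*q)) < 0" using L q by (simp add: mult_neg_pos)
  moreover have "eig_diag \<beta> q = 3 * (h_fun q - r) / (2 * log_ratio q * (q * (1 - 2*q)))"
    using q L qq by (intro eig_diag_at_solution) auto
  ultimately have "0 < eig_diag \<beta> q" by (simp add: divide_neg_neg)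
  moreover have "2 * (1/3) < \<beta> * q"
    using assms(1) qq by (intro mult_strict_mono) auto
  then have "eig_antidiag \<beta> q < 0"
    using assms(1) q by (simp add: eig_antidiag_sign)
  ultimately show ?thesis
    unfolding sigma0_pt_def q_def[symmetric]
    using assms q qq by (intro saddle_at_sym_point grad1_sym_zero) (auto simp: mult_pos_neg)
qed

lemma u_sol_facts:
  assumes "2 < \<beta>" "0 < r" "r < r2 \<beta>"
  defines "u \<equiv> u_sol \<beta> r"
  shows "pt u u = p_pt \<beta> r" "0 < u" "u < 1/2" "grad1 \<beta> r u u = 0" "eig_diag \<beta> u < 0"
    and "f_fun r u = \<beta>" "m0 r < u" "u < k_fun r"
proof -
  have r: "0 < r" "r < 1" using assms r2_props[OF assms(1)] by auto
  note uu = u_sol_props[OF r f_min_lt_of_lt_r2[OF assms(1-3)], folded u_def]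
  show "pt u u = p_pt \<beta> r" by (simp add: p_pt_def u_def)
  have "u < 1/3" using uu(2) r(1) by (simp add: k_fun_def field_simps)
  then show u: "0 < u" "u < 1/2"
    using uu(1) m0_props(1)[OF r] by linarith+
  have D: "0 < 1 - r - 3*u" using uu by (simp add: k_fun_def)
  have L: "0 < log_ratio u" using \<open>u < 1/3\<close> u by (intro log_ratio_pos)
  show "grad1 \<beta> r u u = 0" using u D uu assms(1) by (intro grad1_sym_zero) auto
  have "h_fun u < r" using h_fun_lt_above_m0[OF r] uu u by simp
  moreover have "eig_diag \<beta> u = 3 * (h_fun u - r) / (2 * log_ratio u * (u * (1 - 2*u)))"
    using u D L uu by (intro eig_diag_at_solution) auto
  ultimately show "eig_diag \<beta> u < 0"
    using L u by (auto intro!: divide_neg_pos mult_pos_pos)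
  show "f_fun r u = \<beta>" "m0 r < u" "u < k_fun r" using uu by auto
qed

lemma p_pt_local_max:
  assumes "2 < \<beta>" "0 < r" "r < r1 \<beta>"
  shows "local_max_on (\<lambda>x. Fb \<beta> x r) Xi (p_pt \<beta> r)"
proof -
  define a where "a = 2/(3*\<beta>)"
  note a = r1_facts[OF assms(1), folded a_def]
  have "r < r2 \<beta>" using assms r1_lt_r2[OF assms(1)] by simp
  define u where "u = u_sol \<beta> r"
  note uu = u_sol_facts[OF assms(1,2) \<open>r < r2 \<beta>\<close>, folded u_def]
  have "a < k_fun r" using a(3) assms(3) by (simp add: k_fun_def)
  have "f_fun r a < \<beta>"
    using f_fun_strict_mono_in_r[of a r "r1 \<beta>"] a assms(3) by simp
  have "a < u"
  proof (rule ccontr)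
    assume "\<not> a < u"
    then have "f_fun r u \<le> f_fun r a"
      using strict_mono_on_leD[OF f_fun_strict_mono_mid, of r u a] uu \<open>a < k_fun r\<close> assms r2_props[OF assms(1)]
        \<open>r < r2 \<beta>\<close> by auto
    then show False using \<open>f_fun r a < \<beta>\<close> uu by simp
  qed
  then have "eig_antidiag \<beta> u < 0"
    using assms(1) uu by (simp add: eig_antidiag_sign a_def field_simps)
  then show ?thesis
    unfolding uu(1)[symmetric] using uu assms(1) by (intro local_max_at_sym_point) auto
qed

lemma p_pt_saddle:
  assumes "2 < \<beta>" "r1 \<beta> < r" "r < r2 \<beta>"
  shows "saddle_point (\<lambda>x. Fb \<beta> x r) (p_pt \<beta> r)"
proof -
  define a where "a = 2/(3*\<beta>)"
  note a = r1_facts[OF assms(1), folded a_def]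
  have r: "0 < r" "r < 1" using r1_pos[OF assms(1)] assms r2_props[OF assms(1)] by auto
  define u where "u = u_sol \<beta> r"
  note uu = u_sol_facts[OF assms(1) r(1) assms(3), folded u_def]
  have "u < a"
  proof (rule ccontr)
    assume "\<not> u < a"
    then have "a < k_fun r" using uu by simp
    have "m0 r \<le> a"
    proof (rule ccontr)
      assume "\<not> m0 r \<le> a"
      then have "r < h_fun a" using h_fun_gt_below_m0[OF r] a by simp
      then show False using a(5) assms(2) by simp
    qed
    then have "f_fun r a \<le> f_fun r u"
      using strict_mono_on_leD[OF f_fun_strict_mono_mid[OF r], of a u] uu \<open>\<not> u < a\<close>
      by auto
    moreover have "\<beta> < f_fun r a"
      using f_fun_strict_mono_in_r[of a "r1 \<beta>" r] a assms(2) \<open>a < k_fun r\<close> by (simp add: k_fun_def)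
    ultimately show False using uu by simp
  qed
  then have "0 < eig_antidiag \<beta> u"
    using assms(1) uu by (simp add: eig_antidiag_sign a_def field_simps)
  then show ?thesis
    unfolding uu(1)[symmetric] using uu by (intro saddle_at_sym_point) (auto simp: mult_neg_pos)
qed

theorem lemma5p4:
  fixes \<beta> :: real
  assumes "\<beta> > 2"
  shows "(\<forall>r. 0 < r \<and> r < r2 \<beta> \<longrightarrow> local_min_on (\<lambda>x. Fb \<beta> x r) Xi (m0_pt \<beta> r))
       \<and> (\<forall>r. 0 < r \<longrightarrow> saddle_point (\<lambda>x. Fb \<beta> x r) (sigma0_pt \<beta> r))
       \<and> (\<forall>r. 0 < r \<and> r < r1 \<beta> \<longrightarrow> local_max_on (\<lambda>x. Fb \<beta> x r) Xi (p_pt \<beta> r))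
       \<and> (\<forall>r. r1 \<beta> < r \<and> r < r2 \<beta> \<longrightarrow> saddle_point (\<lambda>x. Fb \<beta> x r) (p_pt \<beta> r))"
proof (intro conjI allI impI)
  fix r :: real
  show "0 < r \<and> r < r2 \<beta> \<Longrightarrow> local_min_on (\<lambda>x. Fb \<beta> x r) Xi (m0_pt \<beta> r)"
    using m0_pt_local_min[OF assms] by blast
  show "0 < r \<Longrightarrow> saddle_point (\<lambda>x. Fb \<beta> x r) (sigma0_pt \<beta> r)"
    using sigma0_pt_saddle[OF assms] by blast
  show "0 < r \<and> r < r1 \<beta> \<Longrightarrow> local_max_on (\<lambda>x. Fb \<beta> x r) Xi (p_pt \<beta> r)"
    using p_pt_local_max[OF assms] by blast
  show "r1 \<beta> < r \<and> r < r2 \<beta> \<Longrightarrow> saddle_point (\<lambda>x. Fb \<beta> x r) (p_pt \<beta> r)"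
    using p_pt_saddle[OF assms] by blast
qed

end
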